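(* Assume the wavelets are compactly supported, let $s>0$, $p\in[1,+\infty)$ with $d-sp>0$, let $d'\in(d-sp,d)$ and let $(K,t,N,a,(\Theta_n),\mu)$ be adapted Cantor data of dimension at least $d'$. For every $\alpha\in(0,d-sp)$ and every $G\subset K$ with $\overline{\dim}_B(G)<\alpha$, there exists $f\in B^{s,1}_p(\mathbb R^d)$ with $\|f\|\le1$ such that: (1) for all $x\in K$ and all $j\in\mathbb N$, $P_jf(x)\ge0$; (2) for all $x\in G$, $\liminf_j\frac{\log|P_jf(x)|}{j\log2}\ge\frac{d-sp-\alpha}p$.
   Context: Standing setup. $(V_j)_{j\in\mathbb Z}$ is an orthogonal multiresolution analysis of $L^2(\mathbb R^d)$ with scaling function $\varphi$, and $\psi^{(1)},\dots,\psi^{(2^d-1)}$ associated wavelets (the functions $2^{dj/2}\psi^{(i)}(2^j\cdot-k)$ form an orthonormal basis of $L^2(\mathbb R^d)$), smooth (at least $\lfloor s\rfloor+1$ derivatives). For $j\ge0$, $k\in\mathbb Z^d$, the dyadic cube $(j,k)=\prod_m[k_m2^{-j},(k_m+1)2^{-j})$, $\Lambda_j$ the set of such cubes, $\psi^{(i)}_{(j,k)}(x)=\psi^{(i)}(2^jx-k)$; for a closed dyadic cube $\mu=\prod_m[k_m2^{-j},(k_m+1)2^{-j}]$ write $\psi^{(1)}_\mu=\psi^{(1)}(2^j\cdot-k)$. For $f$: $C_k=\int\overline{\varphi(x-k)}f$, $c^{(i)}_\lambda=2^{dj}\int\overline{\psi^{(i)}_\lambda}f$, $Q_lf=\sum_i\sum_{\lambda\in\Lambda_l}c^{(i)}_\lambda\psi^{(i)}_\lambda$,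 $P_jf=\sum_kC_k\varphi(\cdot-k)+\sum_{0\le l<j}Q_lf$. $B^{s,q}_p(\mathbb R^d)$: $f$ with $(C_k)\in\ell^p$ and $(\varepsilon_j)\in\ell^q$, $\varepsilon_j=2^{(s-d/p)j}(\sum_i\sum_{\lambda\in\Lambda_j}|c^{(i)}_\lambda|^p)^{1/p}$, norm $\|(C_k)\|_{\ell^p}+\|(\varepsilon_j)\|_{\ell^q}$. $\overline{\dim}_B$ is upper box dimension; $\log0=-\infty$. Adapted Cantor data of dimension at least $d'$: a compact self-similar set $K\subset\mathbb R^d$ satisfying the open set condition with $\dim_{\mathcal H}K=\dim_{\mathcal P}K\ge d'$, integers $t,N\ge1$, a nonzero real $a$, finite families $\Theta_n$ ($n\ge0$) of closed dyadic cubes of side $2^{-(t+Nn)}$ and injective maps $\mu$ from $\Theta_n$ to closed dyadic cubes of side $2^{-Nn}$, such that $K_n=\bigcup_{\lambda\in\Theta_n}\lambda$ is decreasing, $K=\bigcap_nK_n$, and for all $n$, $x\in K_n$, $\lambda\in\Theta_n$: $a\psi^{(1)}_{\mu(\lambda)}(x)\ge1$ if $x\in\lambda$ and $\psi^{(1)}_{\mu(\lambda)}(x)=0$ otherwise. (Such data exist for every $d'\in(0,d)$ when the wavelets are compactly supported.) *)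

theory Defs
  imports "HOL-Analysis.Analysis"
begin

section \<open>Basic notation on R^d = real^'n, d = CARD('n)\<close>

definition ivec :: "('n::finite \<Rightarrow> int) \<Rightarrow> real^'n" where
  "ivec k = (\<chi> m. real_of_int (k m))"

definition L2 :: "(real^'n::finite \<Rightarrow> real) set" where
  "L2 = {f. f \<in> borel_measurable lebesgue \<and> integrable lebesgue (\<lambda>x. (f x)^2)}"

definition l2_inner :: "(real^'n::finite \<Rightarrow> real) \<Rightarrow> (real^'n \<Rightarrow> real) \<Rightarrow> real" where
  "l2_inner f g = (LINT x|lebesgue. f x * g x)"

definition l2_norm :: "(real^'n::finite \<Rightarrow> real) \<Rightarrow> real" where
  "l2_norm f = sqrt (LINT x|lebesgue. (f x)^2)"

definition l2_closed_subspace :: "(real^'n::finite \<Rightarrow> real) set \<Rightarrow> bool" where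
  "l2_closed_subspace W \<longleftrightarrow> W \<subseteq> L2 \<and> (\<lambda>x. 0) \<in> W
     \<and> (\<forall>f\<in>W. \<forall>g\<in>W. (\<lambda>x. f x + g x) \<in> W)
     \<and> (\<forall>c. \<forall>f\<in>W. (\<lambda>x. c * f x) \<in> W)
     \<and> (\<forall>f\<in>L2. (\<forall>e>0. \<exists>g\<in>W. l2_norm (\<lambda>x. f x - g x) < e) \<longrightarrow> f \<in> W)"

definition l2_dense :: "(real^'n::finite \<Rightarrow> real) set \<Rightarrow> bool" where
  "l2_dense W \<longleftrightarrow> (\<forall>f\<in>L2. \<forall>e>0. \<exists>g\<in>W. l2_norm (\<lambda>x. f x - g x) < e)"

definition orthonormal_basis_of ::
  "(real^'n::finite \<Rightarrow> real) set \<Rightarrow> 'i set \<Rightarrow> ('i \<Rightarrow> real^'n \<Rightarrow> real) \<Rightarrow> bool" where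
  "orthonormal_basis_of W I e \<longleftrightarrow>
     (\<forall>i\<in>I. e i \<in> W)
     \<and> (\<forall>i\<in>I. \<forall>j\<in>I. l2_inner (e i) (e j) = (if i = j then 1 else 0))
     \<and> (\<forall>f\<in>W. \<forall>\<epsilon>>0. \<exists>F c. finite F \<and> F \<subseteq> I \<and>
            l2_norm (\<lambda>x. f x - (\<Sum>i\<in>F. c i * e i x)) < \<epsilon>)"

definition orth_mra :: "(int \<Rightarrow> (real^'n::finite \<Rightarrow> real) set) \<Rightarrow> (real^'n \<Rightarrow> real) \<Rightarrow> bool" where
  "orth_mra V \<phi> \<longleftrightarrow>
     (\<forall>j. l2_closed_subspace (V j))
     \<and> (\<forall>j. V j \<subseteq> V (j + 1))
     \<and> (\<forall>j f. f \<in> V j \<longleftrightarrow> (\<lambda>x. f (2 *\<^sub>R x)) \<in> V (j + 1))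
     \<and> (\<Inter>j. V j) = {f\<in>L2. AE x in lebesgue. f x = 0}
     \<and> l2_dense (\<Union>j. V j)
     \<and> orthonormal_basis_of (V 0) UNIV (\<lambda>k x. \<phi> (x - ivec k))"

definition mra_wavelets ::
  "(int \<Rightarrow> (real^'n::finite \<Rightarrow> real) set) \<Rightarrow> (nat \<Rightarrow> real^'n \<Rightarrow> real) \<Rightarrow> bool" where
  "mra_wavelets V \<psi> \<longleftrightarrow>
     orthonormal_basis_of {f\<in>V 1. \<forall>g\<in>V 0. l2_inner f g = 0}
        ({1..<2^CARD('n)} \<times> (UNIV :: ('n \<Rightarrow> int) set))
        (\<lambda>(i,k) x. \<psi> i (x - ivec k))
     \<and> orthonormal_basis_of L2
        ({1..<2^CARD('n)} \<times> (UNIV :: int set) \<times> (UNIV :: ('n \<Rightarrow> int) set))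
        (\<lambda>(i,j,k) x. 2 powr (real CARD('n) * real_of_int j / 2)
                       * \<psi> i (2 powr (real_of_int j) *\<^sub>R x - ivec k))"

fun Ck :: "nat \<Rightarrow> (real^'n::finite \<Rightarrow> real) \<Rightarrow> bool" where
  "Ck 0 f = continuous_on UNIV f"
| "Ck (Suc k) f = (continuous_on UNIV f \<and> (\<forall>x. f differentiable (at x))
      \<and> (\<forall>m. Ck k (\<lambda>x. frechet_derivative f (at x) (axis m 1))))"

definition compactly_supported :: "(real^'n::finite \<Rightarrow> real) \<Rightarrow> bool" where
  "compactly_supported f \<longleftrightarrow> bounded {x. f x \<noteq> 0}"

definition coefC :: "(real^'n::finite \<Rightarrow> real) \<Rightarrow> (real^'n \<Rightarrow> real) \<Rightarrow> ('n \<Rightarrow> int) \<Rightarrow> real" where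
  "coefC \<phi> f k = (LINT x|lebesgue. \<phi> (x - ivec k) * f x)"

definition coefc :: "(nat \<Rightarrow> real^'n::finite \<Rightarrow> real) \<Rightarrow> (real^'n \<Rightarrow> real)
                     \<Rightarrow> nat \<Rightarrow> nat \<Rightarrow> ('n \<Rightarrow> int) \<Rightarrow> real" where
  "coefc \<psi> f i j k = 2 ^ (CARD('n) * j) * (LINT x|lebesgue. \<psi> i (2 ^ j *\<^sub>R x - ivec k) * f x)"

definition Qproj :: "(nat \<Rightarrow> real^'n::finite \<Rightarrow> real) \<Rightarrow> (real^'n \<Rightarrow> real) \<Rightarrow> nat \<Rightarrow> real^'n \<Rightarrow> real" where
  "Qproj \<psi> f l x = (\<Sum>i\<in>{1..<2^CARD('n)}.
       \<Sum>\<^sub>\<infinity>k\<in>(UNIV :: ('n \<Rightarrow> int) set). coefc \<psi> f i l k * \<psi> i (2 ^ l *\<^sub>R x - ivec k))"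

definition Pproj :: "(real^'n::finite \<Rightarrow> real) \<Rightarrow> (nat \<Rightarrow> real^'n \<Rightarrow> real) \<Rightarrow> (real^'n \<Rightarrow> real)
                     \<Rightarrow> nat \<Rightarrow> real^'n \<Rightarrow> real" where
  "Pproj \<phi> \<psi> f j x = (\<Sum>\<^sub>\<infinity>k\<in>(UNIV :: ('n \<Rightarrow> int) set). coefC \<phi> f k * \<phi> (x - ivec k))
                       + (\<Sum>l<j. Qproj \<psi> f l x)"

definition besov_eps :: "(nat \<Rightarrow> real^'n::finite \<Rightarrow> real) \<Rightarrow> real \<Rightarrow> real \<Rightarrow> (real^'n \<Rightarrow> real)
                         \<Rightarrow> nat \<Rightarrow> real" where
  "besov_eps \<psi> s p f j = 2 powr ((s - real CARD('n) / p) * real j)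
      * (\<Sum>i\<in>{1..<2^CARD('n)}. \<Sum>\<^sub>\<infinity>k\<in>(UNIV :: ('n \<Rightarrow> int) set). \<bar>coefc \<psi> f i j k\<bar> powr p) powr (1 / p)"

definition besov :: "(real^'n::finite \<Rightarrow> real) \<Rightarrow> (nat \<Rightarrow> real^'n \<Rightarrow> real) \<Rightarrow> real \<Rightarrow> real \<Rightarrow> real
                     \<Rightarrow> (real^'n \<Rightarrow> real) \<Rightarrow> bool" where
  "besov \<phi> \<psi> s q p f \<longleftrightarrow>
     f \<in> borel_measurable lebesgue
     \<and> (\<forall>k. integrable lebesgue (\<lambda>x. \<phi> (x - ivec k) * f x))
     \<and> (\<forall>i\<in>{1..<2^CARD('n)}. \<forall>j::nat. \<forall>k.
           integrable lebesgue (\<lambda>x. \<psi> i (2 ^ j *\<^sub>R x - ivec k) * f x))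
     \<and> (\<lambda>k. \<bar>coefC \<phi> f k\<bar> powr p) summable_on UNIV
     \<and> (\<forall>i\<in>{1..<2^CARD('n)}. \<forall>j. (\<lambda>k. \<bar>coefc \<psi> f i j k\<bar> powr p) summable_on UNIV)
     \<and> summable (\<lambda>j. besov_eps \<psi> s p f j powr q)"

definition besov_norm :: "(real^'n::finite \<Rightarrow> real) \<Rightarrow> (nat \<Rightarrow> real^'n \<Rightarrow> real) \<Rightarrow> real \<Rightarrow> real \<Rightarrow> real
                     \<Rightarrow> (real^'n \<Rightarrow> real) \<Rightarrow> real" where
  "besov_norm \<phi> \<psi> s q p f =
     (\<Sum>\<^sub>\<infinity>k\<in>(UNIV :: ('n \<Rightarrow> int) set). \<bar>coefC \<phi> f k\<bar> powr p) powr (1 / p)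
     + (\<Sum>j. besov_eps \<psi> s p f j powr q) powr (1 / q)"

definition eln :: "ereal \<Rightarrow> ereal" where
  "eln y = (if y \<le> 0 then -\<infinity> else if y = \<infinity> then \<infinity> else ereal (ln (real_of_ereal y)))"

definition cover_number :: "real \<Rightarrow> 'a::metric_space set \<Rightarrow> ereal" where
  "cover_number \<delta> E = Inf {ereal (real (card F)) | F. finite F \<and> E \<subseteq> \<Union>F
       \<and> (\<forall>U\<in>F. bounded U \<and> diameter U \<le> \<delta>)}"

definition upper_box_dim :: "'a::metric_space set \<Rightarrow> ereal" where
  "upper_box_dim E = Limsup (at_right 0) (\<lambda>\<delta>. eln (cover_number \<delta> E) / ereal (- ln \<delta>))"

definition hausdorff_content :: "real \<Rightarrow> real \<Rightarrow> 'a::metric_space set \<Rightarrow> ennreal" where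
  "hausdorff_content s \<delta> E = (INF U \<in> {U :: nat \<Rightarrow> 'a set. E \<subseteq> (\<Union>i. U i)
        \<and> (\<forall>i. bounded (U i) \<and> diameter (U i) \<le> \<delta>)}.
        \<Sum>i. ennreal (diameter (U i) powr s))"

definition hausdorff_measure :: "real \<Rightarrow> 'a::metric_space set \<Rightarrow> ennreal" where
  "hausdorff_measure s E = (SUP \<delta>\<in>{0<..}. hausdorff_content s \<delta> E)"

definition hausdorff_dim :: "'a::metric_space set \<Rightarrow> real" where
  "hausdorff_dim E = Inf {s. 0 \<le> s \<and> hausdorff_measure s E = 0}"

text \<open>Packing premeasure: supremum over (finite, hence also countable) families of disjoint
  closed balls centred in E with radii at most delta.\<close>
definition packing_pre :: "real \<Rightarrow> real \<Rightarrow> 'a::metric_space set \<Rightarrow> ennreal" where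
  "packing_pre s \<delta> E = (SUP B \<in> {(I, c, r) | (I :: nat set) c r. finite I
        \<and> (\<forall>i\<in>I. c i \<in> E \<and> 0 < r i \<and> r i \<le> \<delta>)
        \<and> (\<forall>i\<in>I. \<forall>j\<in>I. i \<noteq> j \<longrightarrow> cball (c i) (r i) \<inter> cball (c j) (r j) = {})}.
        (case B of (I, c, r) \<Rightarrow> \<Sum>i\<in>I. ennreal ((2 * r i) powr s)))"

definition packing_pre0 :: "real \<Rightarrow> 'a::metric_space set \<Rightarrow> ennreal" where
  "packing_pre0 s E = (INF \<delta>\<in>{0<..}. packing_pre s \<delta> E)"

definition packing_measure :: "real \<Rightarrow> 'a::metric_space set \<Rightarrow> ennreal" where
  "packing_measure s E = (INF A \<in> {A :: nat \<Rightarrow> 'a set. E \<subseteq> (\<Union>i. A i)}.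
        \<Sum>i. packing_pre0 s (A i))"

definition packing_dim :: "'a::metric_space set \<Rightarrow> real" where
  "packing_dim E = Inf {s. 0 \<le> s \<and> packing_measure s E = 0}"

definition self_similar_osc :: "'a::metric_space set \<Rightarrow> bool" where
  "self_similar_osc K \<longleftrightarrow> compact K \<and> K \<noteq> {} \<and>
     (\<exists>(m::nat) r S. m \<ge> 1
        \<and> (\<forall>i<m. 0 < r i \<and> r i < 1 \<and> (\<forall>x y. dist (S i x) (S i y) = r i * dist x y))
        \<and> K = (\<Union>i<m. S i ` K)
        \<and> (\<exists>U. open U \<and> U \<noteq> {} \<and> (\<forall>i<m. S i ` U \<subseteq> U)
              \<and> (\<forall>i<m. \<forall>j<m. i \<noteq> j \<longrightarrow> S i ` U \<inter> S j ` U = {})))"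

definition closed_cube :: "nat \<times> ('n::finite \<Rightarrow> int) \<Rightarrow> (real^'n) set" where
  "closed_cube jk = (case jk of (j, k) \<Rightarrow>
     {x. \<forall>m. real_of_int (k m) / 2 ^ j \<le> x $ m \<and> x $ m \<le> (real_of_int (k m) + 1) / 2 ^ j})"

definition psi_cube :: "(nat \<Rightarrow> real^'n::finite \<Rightarrow> real) \<Rightarrow> nat \<times> ('n \<Rightarrow> int) \<Rightarrow> real^'n \<Rightarrow> real" where
  "psi_cube \<psi> jk x = (case jk of (j, k) \<Rightarrow> \<psi> 1 (2 ^ j *\<^sub>R x - ivec k))"

definition cantor_level :: "(nat \<Rightarrow> (nat \<times> ('n::finite \<Rightarrow> int)) set) \<Rightarrow> nat \<Rightarrow> (real^'n) set" where
  "cantor_level \<Theta> n = (\<Union>Q\<in>\<Theta> n. closed_cube Q)"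

definition adapted_cantor_data ::
  "(nat \<Rightarrow> real^'n::finite \<Rightarrow> real) \<Rightarrow> real \<Rightarrow> (real^'n) set \<Rightarrow> nat \<Rightarrow> nat \<Rightarrow> real
   \<Rightarrow> (nat \<Rightarrow> (nat \<times> ('n \<Rightarrow> int)) set)
   \<Rightarrow> (nat \<Rightarrow> nat \<times> ('n \<Rightarrow> int) \<Rightarrow> nat \<times> ('n \<Rightarrow> int)) \<Rightarrow> bool" where
  "adapted_cantor_data \<psi> d' K t N a \<Theta> \<mu> \<longleftrightarrow>
     self_similar_osc K
     \<and> hausdorff_dim K = packing_dim K \<and> hausdorff_dim K \<ge> d'
     \<and> t \<ge> 1 \<and> N \<ge> 1 \<and> a \<noteq> 0
     \<and> (\<forall>n. finite (\<Theta> n) \<and> (\<forall>Q\<in>\<Theta> n. fst Q = t + N * n))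
     \<and> (\<forall>n. inj_on (\<mu> n) (\<Theta> n) \<and> (\<forall>Q\<in>\<Theta> n. fst (\<mu> n Q) = N * n))
     \<and> (\<forall>n. cantor_level \<Theta> (Suc n) \<subseteq> cantor_level \<Theta> n)
     \<and> K = (\<Inter>n. cantor_level \<Theta> n)
     \<and> (\<forall>n. \<forall>x\<in>cantor_level \<Theta> n. \<forall>Q\<in>\<Theta> n.
           (x \<in> closed_cube Q \<longrightarrow> a * psi_cube \<psi> (\<mu> n Q) x \<ge> 1)
         \<and> (x \<notin> closed_cube Q \<longrightarrow> psi_cube \<psi> (\<mu> n Q) x = 0))"

end

theory Submission
  imports Defs
begin

text \<open>The function is a lacunary wavelet series
  $f = \sum_n b_n\, \mathrm{sgn}(a) \sum_{Q} \psi^{(1)}_{\mu_n(Q)}$, where the $n$-th block only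
  uses the cubes $Q \in \Theta_n$ that meet $G$. Since $\overline{\dim}_B G < \beta < \alpha$, there are at
  most $4^d 2^{\beta(t+Nn)}$ of them, so amplitudes $b_n$ of order $2^{(d/p - s - \beta/p)Nn}$ (damped
  by a geometric weight) still give Besov norm $1$. The wavelets used have pairwise distinct indices
  and are orthogonal to the scaling functions, hence $P_j f$ is a partial sum of blocks. On $K$ the
  adapted sign condition makes every block nonnegative, and at a point of $G$ the last block
  involved is at least $b_n/|a|$, which yields the growth rate.\<close>

lemma lebesgue_affine_scaleR:
  fixes t :: "'a::euclidean_space" and c :: real
  assumes c: "c \<noteq> 0"
  shows "lebesgue = density (distr lebesgue lebesgue (\<lambda>x. t + c *\<^sub>R x)) (\<lambda>_. \<bar>c\<bar>^DIM('a))"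
    and "(\<lambda>x. t + c *\<^sub>R x) \<in> lebesgue \<rightarrow>\<^sub>M lebesgue"
proof -
  have T: "(\<lambda>x. t + (\<Sum>j\<in>Basis. (c * (x \<bullet> j)) *\<^sub>R j)) = (\<lambda>x::'a. t + c *\<^sub>R x)"
    unfolding scaleR_scaleR[symmetric] scaleR_sum_right[symmetric] euclidean_representation by simp
  show "lebesgue = density (distr lebesgue lebesgue (\<lambda>x. t + c *\<^sub>R x)) (\<lambda>_. \<bar>c\<bar>^DIM('a))"
    using lebesgue_affine_euclidean[where c="\<lambda>_::'a. c" and t=t] c unfolding T by simp
  show "(\<lambda>x. t + c *\<^sub>R x) \<in> lebesgue \<rightarrow>\<^sub>M lebesgue"
    using lebesgue_affine_measurable[where c="\<lambda>_::'a. c" and t=t] c unfolding T by simp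
qed

lemma lebesgue_integrable_affine:
  fixes f :: "'a::euclidean_space \<Rightarrow> real" and c :: real
  assumes f: "integrable lebesgue f" and c: "c \<noteq> 0"
  shows "integrable lebesgue (\<lambda>x. f (t + c *\<^sub>R x))"
proof -
  note m = lebesgue_affine_scaleR(2)[OF c, of t]
  have "integrable (density (distr lebesgue lebesgue (\<lambda>x. t + c *\<^sub>R x)) (\<lambda>_. \<bar>c\<bar>^DIM('a))) f"
    using f lebesgue_affine_scaleR(1)[OF c, of t] by simp
  then have "integrable (distr lebesgue lebesgue (\<lambda>x. t + c *\<^sub>R x)) (\<lambda>x. \<bar>c\<bar>^DIM('a) *\<^sub>R f x)"
    by (subst (asm) integrable_density) (use f c in auto)
  then have "integrable lebesgue (\<lambda>x. \<bar>c\<bar>^DIM('a) *\<^sub>R f (t + c *\<^sub>R x))"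
    by (subst (asm) integrable_distr_eq) (use m f in auto)
  then show ?thesis using c by simp
qed

lemma lebesgue_integrable_affine_iff:
  fixes f :: "'a::euclidean_space \<Rightarrow> real" and c :: real
  assumes c: "c \<noteq> 0"
  shows "integrable lebesgue (\<lambda>x. f (t + c *\<^sub>R x)) \<longleftrightarrow> integrable lebesgue f"
  using lebesgue_integrable_affine[of f c t]
    lebesgue_integrable_affine[of "\<lambda>x. f (t + c *\<^sub>R x)" "1/c" "-t/\<^sub>R c"] c
  by (auto simp: algebra_simps)

lemma lebesgue_integral_affine:
  fixes f :: "'a::euclidean_space \<Rightarrow> real" and c :: real
  assumes c: "c \<noteq> 0"
  shows "(LINT x|lebesgue. f x) = \<bar>c\<bar>^DIM('a) * (LINT x|lebesgue. f (t + c *\<^sub>R x))"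
proof cases
  assume f: "integrable lebesgue f"
  note m = lebesgue_affine_scaleR(2)[OF c, of t]
  show ?thesis
    by (subst lebesgue_affine_scaleR(1)[OF c, of t])
      (use f m in \<open>auto simp: integral_density integral_distr\<close>)
next
  assume "\<not> integrable lebesgue f" with c show ?thesis
    by (simp add: lebesgue_integrable_affine_iff not_integrable_integral_eq)
qed

lemma AE_summable_abs_of_summable_integrals:
  fixes T :: "nat \<Rightarrow> 'a \<Rightarrow> real"
  assumes int: "\<And>n. integrable M (T n)" and sm: "summable (\<lambda>n. LINT x|M. \<bar>T n x\<bar>)"
  shows "AE x in M. summable (\<lambda>n. \<bar>T n x\<bar>)"
proof -
  have meas: "\<And>n. (\<lambda>x. ennreal \<bar>T n x\<bar>) \<in> borel_measurable M"
    using int by (intro measurable_compose[OF _ measurable_ennreal]) (auto intro: borel_measurable_integrable)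
  have "(\<integral>\<^sup>+ x. (\<Sum>n. ennreal \<bar>T n x\<bar>) \<partial>M) = (\<Sum>n. \<integral>\<^sup>+ x. ennreal \<bar>T n x\<bar> \<partial>M)"
    by (rule nn_integral_suminf[OF meas])
  also have "\<dots> = (\<Sum>n. ennreal (LINT x|M. \<bar>T n x\<bar>))"
    using int by (intro arg_cong[where f=suminf] ext nn_integral_eq_integral) auto
  also have "\<dots> \<noteq> \<infinity>"
    unfolding infinity_ennreal_def
    by (rule ennreal_suminf_neq_top[OF sm]) (rule abs_ge_zero[THEN integral_nonneg_AE[OF AE_I2]])
  finally have "AE x in M. (\<Sum>n. ennreal \<bar>T n x\<bar>) \<noteq> \<infinity>"
    by (intro nn_integral_noteq_infinite) (use meas in auto)
  then show ?thesis
    by eventually_elim (auto intro: summable_suminf_not_top)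
qed

lemma infsum_UNIV_eq_sum:
  fixes f :: "'a \<Rightarrow> real"
  assumes "finite A" "\<And>x. x \<notin> A \<Longrightarrow> f x = 0"
  shows "infsum f UNIV = sum f A" and "f summable_on UNIV"
proof -
  have "infsum f UNIV = infsum f A"
    by (rule infsum_cong_neutral) (use assms in auto)
  then show "infsum f UNIV = sum f A" using assms by simp
  have "f summable_on UNIV \<longleftrightarrow> f summable_on A"
    by (rule summable_on_cong_neutral) (use assms in auto)
  then show "f summable_on UNIV" using assms by simp
qed

definition Cc :: "(real^'n::finite \<Rightarrow> real) \<Rightarrow> bool" where
  "Cc g \<longleftrightarrow> continuous_on UNIV g \<and> compactly_supported g"

lemma Ck_imp_Cc: "Ck k g \<Longrightarrow> compactly_supported g \<Longrightarrow> Cc g"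
  unfolding Cc_def by (cases k) auto

lemma Cc_support_bound: assumes "Cc g" obtains B where "B > 0" "\<And>x. g x \<noteq> 0 \<Longrightarrow> norm x \<le> B"
proof -
  from assms obtain B where "\<forall>x\<in>{x. g x \<noteq> 0}. norm x \<le> B"
    unfolding Cc_def compactly_supported_def bounded_iff by blast
  then show ?thesis using that[of "max B 1"] by fastforce
qed

lemma Cc_bounded: assumes "Cc g" obtains C where "\<And>x. \<bar>g x\<bar> \<le> C"
proof -
  obtain B where B: "B > 0" "\<And>x. g x \<noteq> 0 \<Longrightarrow> norm x \<le> B" using Cc_support_bound[OF assms] by blast
  have "compact (g ` cball 0 B)"
    using assms unfolding Cc_def by (intro compact_continuous_image) (auto intro: continuous_on_subset)
  then obtain C where C: "\<And>y. y \<in> g ` cball 0 B \<Longrightarrow> norm y \<le> C"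
    unfolding bounded_iff by (meson compact_imp_bounded bounded_iff)
  show ?thesis
  proof (rule that[of "max C 0"])
    fix x show "\<bar>g x\<bar> \<le> max C 0"
      using C[of "g x"] B(2)[of x] by (cases "g x = 0") auto
  qed
qed

lemma Cc_measurable: "Cc g \<Longrightarrow> g \<in> borel_measurable lebesgue"
  unfolding Cc_def by (rule measurable_completion) (simp add: borel_measurable_continuous_onI)

lemma Cc_integrable: assumes "Cc g" shows "integrable lebesgue g"
proof -
  obtain B where B: "B > 0" "\<And>x. g x \<noteq> 0 \<Longrightarrow> norm x \<le> B" using Cc_support_bound[OF assms] by blast
  have "integrable lborel (\<lambda>x. indicator (cball 0 B) x *\<^sub>R g x)"
    using assms unfolding Cc_def by (intro borel_integrable_compact) (auto intro: continuous_on_subset)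
  moreover have "(\<lambda>x. indicator (cball 0 B) x *\<^sub>R g x) = g"
    using B(2) by (auto simp: indicator_def fun_eq_iff)
  ultimately have "integrable lborel g" by simp
  moreover have "g \<in> borel_measurable borel"
    using assms unfolding Cc_def by (simp add: borel_measurable_continuous_onI)
  ultimately show ?thesis by (simp add: integrable_completion)
qed

lemma Cc_mult: assumes "Cc f" "Cc g" shows "Cc (\<lambda>x. f x * g x)"
proof -
  have "continuous_on UNIV (\<lambda>x. f x * g x)"
    using assms unfolding Cc_def by (intro continuous_on_mult) auto
  moreover have "bounded {x. f x * g x \<noteq> 0}"
    by (rule bounded_subset[of "{x. f x \<noteq> 0}"]) (use assms in \<open>auto simp: Cc_def compactly_supported_def\<close>)
  ultimately show ?thesis by (simp add: Cc_def compactly_supported_def)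
qed

lemma Cc_cmult: assumes "Cc g" shows "Cc (\<lambda>x. c * g x)"
proof -
  have "continuous_on UNIV (\<lambda>x. c * g x)"
    using assms unfolding Cc_def by (intro continuous_on_mult continuous_on_const) auto
  moreover have "bounded {x. c * g x \<noteq> 0}"
    by (rule bounded_subset[of "{x. g x \<noteq> 0}"]) (use assms in \<open>auto simp: Cc_def compactly_supported_def\<close>)
  ultimately show ?thesis by (simp add: Cc_def compactly_supported_def)
qed

lemma Cc_add: assumes "Cc f" "Cc g" shows "Cc (\<lambda>x. f x + g x)"
proof -
  have "continuous_on UNIV (\<lambda>x. f x + g x)"
    using assms unfolding Cc_def by (intro continuous_on_add) auto
  moreover have "bounded {x. f x + g x \<noteq> 0}"
    by (rule bounded_subset[of "{x. f x \<noteq> 0} \<union> {x. g x \<noteq> 0}"])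
      (use assms in \<open>auto simp: Cc_def compactly_supported_def\<close>)
  ultimately show ?thesis by (simp add: Cc_def compactly_supported_def)
qed

lemma Cc_sum: "finite A \<Longrightarrow> (\<And>a. a \<in> A \<Longrightarrow> Cc (F a)) \<Longrightarrow> Cc (\<lambda>x. \<Sum>a\<in>A. F a x)"
proof (induction A rule: finite_induct)
  case empty then show ?case by (simp add: Cc_def compactly_supported_def)
next
  case (insert a A)
  then have "Cc (\<lambda>x. F a x + (\<Sum>a\<in>A. F a x))" by (intro Cc_add) auto
  then show ?case using insert by simp
qed

lemma Cc_affine: assumes "Cc g" "c \<noteq> 0" shows "Cc (\<lambda>x. g (c *\<^sub>R x - v))"
proof -
  obtain B where B: "\<And>x. g x \<noteq> 0 \<Longrightarrow> norm x \<le> B" using Cc_support_bound[OF assms(1)] by blast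
  have "norm x \<le> (B + norm v) / \<bar>c\<bar>" if "g (c *\<^sub>R x - v) \<noteq> 0" for x
  proof -
    have "norm (c *\<^sub>R x) - norm v \<le> B"
      using B[OF that] norm_triangle_ineq2[of "c *\<^sub>R x" v] by linarith
    then show ?thesis using assms(2) by (simp add: pos_le_divide_eq mult.commute)
  qed
  then have "bounded {x. g (c *\<^sub>R x - v) \<noteq> 0}" unfolding bounded_iff by blast
  moreover have "continuous_on UNIV (\<lambda>x. g (c *\<^sub>R x - v))"
  proof -
    have "continuous_on UNIV (\<lambda>x::real^'a. c *\<^sub>R x - v)"
      by (intro continuous_on_diff continuous_on_scaleR continuous_on_id continuous_on_const)
    moreover have "continuous_on (range (\<lambda>x::real^'a. c *\<^sub>R x - v)) g"
      using assms(1) unfolding Cc_def by (rule continuous_on_subset[OF conjunct1]) simp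
    ultimately show ?thesis using continuous_on_compose[of UNIV "\<lambda>x::real^'a. c *\<^sub>R x - v" g] by (simp add: o_def)
  qed
  ultimately show ?thesis unfolding Cc_def compactly_supported_def by simp
qed

lemma integral_abs_psi_cube:
  fixes \<psi> :: "nat \<Rightarrow> real^'n::finite \<Rightarrow> real"
  shows "(LINT x|lebesgue. \<bar>psi_cube \<psi> (l, k) x\<bar>) = (LINT x|lebesgue. \<bar>\<psi> 1 x\<bar>) / 2 ^ (CARD('n) * l)"
proof -
  define G where "G = (\<lambda>y::real^'n. \<bar>\<psi> 1 (y - ivec k)\<bar>)"
  have "(LINT x|lebesgue. \<bar>\<psi> 1 x\<bar>) = (LINT y|lebesgue. G y)"
    using lebesgue_integral_affine[of 1 "\<lambda>x. \<bar>\<psi> 1 x\<bar>" "- ivec k"] unfolding G_def by simp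
  also have "(LINT y|lebesgue. G y) = \<bar>(2::real)^l\<bar>^DIM(real^'n) * (LINT x|lebesgue. G (0 + (2^l) *\<^sub>R x))"
    by (rule lebesgue_integral_affine) simp
  also have "(\<lambda>x. G (0 + (2^l) *\<^sub>R x)) = (\<lambda>x. \<bar>psi_cube \<psi> (l, k) x\<bar>)"
    unfolding G_def psi_cube_def by (simp add: fun_eq_iff)
  finally show ?thesis by (simp add: power_mult field_simps)
qed

section \<open>Orthogonality relations of compactly supported wavelets\<close>

lemma one_in_wavelet_indices: "(1::nat) \<in> {1..<2^CARD('n::finite)}"
  using power_increasing[of 1 "CARD('n)" "2::nat"] by auto

locale compact_wavelets =
  fixes V :: "int \<Rightarrow> (real^'n::finite \<Rightarrow> real) set" and \<phi> :: "real^'n \<Rightarrow> real"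
    and \<psi> :: "nat \<Rightarrow> real^'n \<Rightarrow> real"
  assumes mra: "orth_mra V \<phi>" and wav: "mra_wavelets V \<psi>"
    and Cc_phi: "Cc \<phi>" and Cc_psi: "\<And>i. i \<in> {1..<2^CARD('n)} \<Longrightarrow> Cc (\<psi> i)"
begin

lemma wavelet_integral_product:
  assumes i: "i \<in> {1..<2^CARD('n)}" and i': "i' \<in> {1..<2^CARD('n)}"
  shows "(LINT x|lebesgue. \<psi> i (2 ^ j *\<^sub>R x - ivec k) * \<psi> i' (2 ^ j' *\<^sub>R x - ivec k'))
         = (if i = i' \<and> j = j' \<and> k = k' then 1 / 2 ^ (CARD('n) * j) else 0)"
proof -
  define A where "A = (\<lambda>j::nat. 2 powr (real CARD('n) * real j / 2))"
  define I where "I = (LINT x|lebesgue. \<psi> i (2 ^ j *\<^sub>R x - ivec k) * \<psi> i' (2 ^ j' *\<^sub>R x - ivec k'))"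
  have AA: "A j * A j = 2 ^ (CARD('n) * j)"
    unfolding A_def by (simp add: powr_add[symmetric] powr_realpow[symmetric] mult.commute)
  have "\<forall>a\<in>{1..<2^CARD('n)} \<times> (UNIV :: int set) \<times> (UNIV :: ('n \<Rightarrow> int) set).
        \<forall>b\<in>{1..<2^CARD('n)} \<times> (UNIV :: int set) \<times> (UNIV :: ('n \<Rightarrow> int) set).
        l2_inner ((\<lambda>(i,j,k) x. 2 powr (real CARD('n) * real_of_int j / 2)
                     * \<psi> i (2 powr (real_of_int j) *\<^sub>R x - ivec k)) a)
                 ((\<lambda>(i,j,k) x. 2 powr (real CARD('n) * real_of_int j / 2)
                     * \<psi> i (2 powr (real_of_int j) *\<^sub>R x - ivec k)) b) = (if a = b then 1 else 0)"
    using wav unfolding mra_wavelets_def orthonormal_basis_of_def by blast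
  from this[rule_format, of "(i, int j, k)" "(i', int j', k')"] i i'
  have "l2_inner (\<lambda>x. A j * \<psi> i (2 ^ j *\<^sub>R x - ivec k)) (\<lambda>x. A j' * \<psi> i' (2 ^ j' *\<^sub>R x - ivec k'))
      = (if (i, int j, k) = (i', int j', k') then 1 else 0)"
    by (simp add: A_def powr_realpow)
  moreover have "l2_inner (\<lambda>x. A j * \<psi> i (2 ^ j *\<^sub>R x - ivec k)) (\<lambda>x. A j' * \<psi> i' (2 ^ j' *\<^sub>R x - ivec k'))
      = A j * A j' * I"
    unfolding l2_inner_def I_def by (simp add: ac_simps)
  ultimately have E: "A j * A j' * I = (if (i, int j, k) = (i', int j', k') then 1 else 0)"
    by simp
  show ?thesis
  proof (cases "i = i' \<and> j = j' \<and> k = k'")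
    case True
    then have "A j * A j * I = 1" using E by simp
    then have "2 ^ (CARD('n) * j) * I = 1" unfolding AA .
    then show ?thesis using True unfolding I_def by (simp add: field_simps)
  next
    case False
    then show ?thesis using E by (auto simp: A_def I_def)
  qed
qed

lemma V0_dilate: assumes "g \<in> V 0" shows "(\<lambda>x. g ((1/2)^l *\<^sub>R x)) \<in> V 0"
proof (induction l)
  case 0 then show ?case using assms by simp
next
  case (Suc l)
  define f where "f = (\<lambda>x. g ((1/2)^(Suc l) *\<^sub>R x))"
  have scale: "\<forall>j f. f \<in> V j \<longleftrightarrow> (\<lambda>x. f (2 *\<^sub>R x)) \<in> V (j + 1)" and mono: "\<forall>j. V j \<subseteq> V (j + 1)"
    using mra unfolding orth_mra_def by blast+
  have "(\<lambda>x. f (2 *\<^sub>R x)) = (\<lambda>x. g ((1/2)^l *\<^sub>R x))"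
    unfolding f_def by simp
  then have "f \<in> V (-1)" using Suc scale[rule_format, of f "-1"] by simp
  then show ?case using mono[rule_format, of "-1"] unfolding f_def by auto
qed

text \<open>Dilating $g \in V_0$ by $2^{-l}$ stays in $V_0$, which reduces level $l$ to level $0$.\<close>
lemma V0_orthogonal_wavelet:
  assumes g: "g \<in> V 0" and i: "i \<in> {1..<2^CARD('n)}"
  shows "(LINT x|lebesgue. g x * \<psi> i (2 ^ l *\<^sub>R x - ivec k)) = 0"
proof -
  define F where "F = (\<lambda>y. \<psi> i (y - ivec k) * g ((1/2)^l *\<^sub>R y))"
  have "orthonormal_basis_of {f\<in>V 1. \<forall>g\<in>V 0. l2_inner f g = 0}
        ({1..<2^CARD('n)} \<times> (UNIV :: ('n \<Rightarrow> int) set)) (\<lambda>(i,k) x. \<psi> i (x - ivec k))"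
    using wav unfolding mra_wavelets_def by blast
  then have "l2_inner (\<lambda>x. \<psi> i (x - ivec k)) (\<lambda>x. g ((1/2)^l *\<^sub>R x)) = 0"
    using i V0_dilate[OF g] unfolding orthonormal_basis_of_def by fastforce
  then have "(LINT y|lebesgue. F y) = 0" unfolding l2_inner_def F_def .
  moreover have "(LINT y|lebesgue. F y)
      = \<bar>(2::real)^l\<bar>^DIM(real^'n) * (LINT x|lebesgue. F (0 + (2^l) *\<^sub>R x))"
    by (rule lebesgue_integral_affine) simp
  moreover have "(\<lambda>x. F (0 + (2^l) *\<^sub>R x)) = (\<lambda>x. g x * \<psi> i (2 ^ l *\<^sub>R x - ivec k))"
    unfolding F_def by (auto simp: power_mult_distrib[symmetric] fun_eq_iff)
  ultimately show ?thesis by simp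
qed

lemma scaling_orthogonal_wavelet:
  assumes "i \<in> {1..<2^CARD('n)}"
  shows "(LINT x|lebesgue. \<phi> (x - ivec k') * \<psi> i (2 ^ l *\<^sub>R x - ivec k)) = 0"
proof -
  have "(\<lambda>x. \<phi> (x - ivec k')) \<in> V 0"
    using mra unfolding orth_mra_def orthonormal_basis_of_def by blast
  then show ?thesis using V0_orthogonal_wavelet assms by blast
qed

lemma Cc_phi_shift: "Cc (\<lambda>x. \<phi> (x - ivec k))"
  using Cc_affine[OF Cc_phi, of 1 "ivec k"] by simp

lemma Cc_psi_shift: "i \<in> {1..<2^CARD('n)} \<Longrightarrow> Cc (\<lambda>x. \<psi> i ((2::real) ^ j *\<^sub>R x - ivec k))"
  using Cc_affine[OF Cc_psi, of i "(2::real)^j" "ivec k"] by simp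

lemma Cc_wavelet_cube: "Cc (psi_cube \<psi> Q)"
  using Cc_psi_shift[OF one_in_wavelet_indices, of "fst Q" "snd Q"]
  by (cases Q) (simp add: psi_cube_def[abs_def])

end

section \<open>Lacunary wavelet series\<close>

lemma besov_eps_nonneg: "besov_eps \<psi> s p f j \<ge> 0"
  unfolding besov_eps_def by simp

text \<open>The $n$-th block only involves the wavelets $\psi^{(1)}_{\mu_n(Q)}$, $Q \in S_n$, which all
  live on the single level $Nn$ and are pairwise distinct; hence every wavelet coefficient of the
  series is either $0$ or $\sigma b_n$.\<close>
locale lacunary_series = compact_wavelets V \<phi> \<psi>
  for V :: "int \<Rightarrow> (real^'n::finite \<Rightarrow> real) set" and \<phi> \<psi> +
  fixes S :: "nat \<Rightarrow> (nat \<times> ('n \<Rightarrow> int)) set"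
    and \<mu> :: "nat \<Rightarrow> nat \<times> ('n \<Rightarrow> int) \<Rightarrow> nat \<times> ('n \<Rightarrow> int)"
    and N :: nat and b :: "nat \<Rightarrow> real" and \<sigma> :: real
  assumes S_finite: "\<And>n. finite (S n)" and \<mu>_inj_on: "\<And>n. inj_on (\<mu> n) (S n)"
    and \<mu>_fst: "\<And>n Q. Q \<in> S n \<Longrightarrow> fst (\<mu> n Q) = N * n"
    and N_ge_1: "N \<ge> 1" and b_nonneg: "\<And>n. b n \<ge> 0" and \<sigma>_abs: "\<bar>\<sigma>\<bar> = 1"
    and mass_summable: "summable (\<lambda>n. b n * real (card (S n)) / 2 ^ (CARD('n) * (N * n)))"
begin

definition block :: "nat \<Rightarrow> real^'n \<Rightarrow> real" where
  "block n x = \<sigma> * b n * (\<Sum>Q\<in>S n. psi_cube \<psi> (\<mu> n Q) x)"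

definition series :: "real^'n \<Rightarrow> real" where
  "series x = (\<Sum>n. block n x)"

lemma Cc_block: "Cc (block n)"
  unfolding block_def[abs_def] by (intro Cc_cmult Cc_sum S_finite Cc_wavelet_cube)

lemma integral_abs_block_le:
  "(LINT x|lebesgue. \<bar>block n x\<bar>)
     \<le> b n * real (card (S n)) * (LINT x|lebesgue. \<bar>\<psi> 1 x\<bar>) / 2 ^ (CARD('n) * (N * n))"
proof -
  have int: "\<And>Q. integrable lebesgue (\<lambda>x. \<bar>psi_cube \<psi> (\<mu> n Q) x\<bar>)"
    by (rule integrable_abs[OF Cc_integrable[OF Cc_wavelet_cube]])
  have "(LINT x|lebesgue. \<bar>block n x\<bar>) \<le> (LINT x|lebesgue. b n * (\<Sum>Q\<in>S n. \<bar>psi_cube \<psi> (\<mu> n Q) x\<bar>))"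
  proof (rule integral_mono)
    show "integrable lebesgue (\<lambda>x. \<bar>block n x\<bar>)" using Cc_integrable[OF Cc_block] by simp
    show "integrable lebesgue (\<lambda>x. b n * (\<Sum>Q\<in>S n. \<bar>psi_cube \<psi> (\<mu> n Q) x\<bar>))"
      using int by (intro integrable_mult_right integrable_sum) auto
    show "\<bar>block n x\<bar> \<le> b n * (\<Sum>Q\<in>S n. \<bar>psi_cube \<psi> (\<mu> n Q) x\<bar>)" for x
      unfolding block_def using \<sigma>_abs b_nonneg[of n]
      by (simp add: abs_mult mult_left_mono)
  qed
  also have "\<dots> = b n * (\<Sum>Q\<in>S n. LINT x|lebesgue. \<bar>psi_cube \<psi> (\<mu> n Q) x\<bar>)"
    using int by (simp add: Bochner_Integration.integral_sum)
  also have "\<dots> = b n * (\<Sum>Q\<in>S n. (LINT x|lebesgue. \<bar>\<psi> 1 x\<bar>) / 2 ^ (CARD('n) * (N * n)))"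
  proof -
    have "(LINT x|lebesgue. \<bar>psi_cube \<psi> (\<mu> n Q) x\<bar>) = (LINT x|lebesgue. \<bar>\<psi> 1 x\<bar>) / 2 ^ (CARD('n) * (N * n))"
      if "Q \<in> S n" for Q
      using integral_abs_psi_cube[of \<psi> "N * n" "snd (\<mu> n Q)"] \<mu>_fst[OF that] by (metis prod.collapse)
    then show ?thesis by simp
  qed
  finally show ?thesis by simp
qed

lemma
  assumes g: "Cc g"
  shows integrable_mult_series: "integrable lebesgue (\<lambda>x. g x * series x)"
    and integral_mult_series: "(LINT x|lebesgue. g x * series x) = (\<Sum>n. LINT x|lebesgue. g x * block n x)"
proof -
  obtain C where C: "\<And>x. \<bar>g x\<bar> \<le> C" using Cc_bounded[OF g] by blast
  have C0: "C \<ge> 0" using C[of 0] by simp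
  define I where "I = (LINT x|lebesgue. \<bar>\<psi> 1 x\<bar>)"
  have I0: "I \<ge> 0" unfolding I_def by simp
  have int: "integrable lebesgue (\<lambda>x. g x * block n x)" for n
    by (rule Cc_integrable[OF Cc_mult[OF g Cc_block]])
  have bound: "(LINT x|lebesgue. \<bar>g x * block n x\<bar>)
      \<le> C * I * (b n * real (card (S n)) / 2 ^ (CARD('n) * (N * n)))" for n
  proof -
    have "(LINT x|lebesgue. \<bar>g x * block n x\<bar>) \<le> (LINT x|lebesgue. C * \<bar>block n x\<bar>)"
      using integrable_abs[OF int[of n]] integrable_abs[OF Cc_integrable[OF Cc_block, of n]] C
      by (intro integral_mono) (auto simp: abs_mult intro: mult_right_mono)
    also have "\<dots> \<le> C * (b n * real (card (S n)) * I / 2 ^ (CARD('n) * (N * n)))"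
      using mult_left_mono[OF integral_abs_block_le[of n] C0] unfolding I_def by simp
    finally show ?thesis by (simp add: field_simps)
  qed
  have sm: "summable (\<lambda>n. LINT x|lebesgue. \<bar>g x * block n x\<bar>)"
    by (rule summable_comparison_test[OF _ summable_mult[OF mass_summable, of "C * I"]])
      (use bound in \<open>auto intro!: exI[of _ 0] simp: integral_nonneg_AE\<close>)
  have AEs: "AE x in lebesgue. summable (\<lambda>n. \<bar>g x * block n x\<bar>)"
    by (rule AE_summable_abs_of_summable_integrals[OF int sm])
  have eq: "AE x in lebesgue. g x * series x = (\<Sum>n. g x * block n x)"
    using AEs
  proof eventually_elim
    fix x assume s: "summable (\<lambda>n. \<bar>g x * block n x\<bar>)"
    show "g x * series x = (\<Sum>n. g x * block n x)"
    proof (cases "g x = 0")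
      case False
      then have "summable (\<lambda>n. block n x)"
        using summable_rabs_cancel[OF s] by simp
      then show ?thesis unfolding series_def by (simp add: suminf_mult)
    qed simp
  qed
  have meas1: "(\<lambda>x. g x * series x) \<in> borel_measurable lebesgue"
    using Cc_measurable[OF g] Cc_measurable[OF Cc_block] unfolding series_def[abs_def] by measurable
  have meas2: "(\<lambda>x. \<Sum>n. g x * block n x) \<in> borel_measurable lebesgue"
    using int by (intro borel_measurable_suminf) auto
  show "integrable lebesgue (\<lambda>x. g x * series x)"
    using integrable_cong_AE[OF meas1 meas2 eq] integrable_suminf[of lebesgue "\<lambda>n x. g x * block n x"] int AEs sm
    by simp
  have "(LINT x|lebesgue. g x * series x) = (LINT x|lebesgue. (\<Sum>n. g x * block n x))"
    by (rule integral_cong_AE[OF meas1 meas2 eq])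
  also have "\<dots> = (\<Sum>n. LINT x|lebesgue. g x * block n x)"
    using integral_suminf[of lebesgue "\<lambda>n x. g x * block n x"] int AEs sm by simp
  finally show "(LINT x|lebesgue. g x * series x) = (\<Sum>n. LINT x|lebesgue. g x * block n x)" .
qed

lemma integral_mult_block:
  assumes g: "Cc g"
  shows "(LINT x|lebesgue. g x * block n x)
       = \<sigma> * b n * (\<Sum>Q\<in>S n. LINT x|lebesgue. g x * psi_cube \<psi> (\<mu> n Q) x)"
proof -
  have "(\<lambda>x. g x * block n x) = (\<lambda>x. \<sigma> * b n * (\<Sum>Q\<in>S n. g x * psi_cube \<psi> (\<mu> n Q) x))"
    unfolding block_def by (simp add: sum_distrib_left ac_simps fun_eq_iff)
  then have "(LINT x|lebesgue. g x * block n x)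
      = \<sigma> * b n * (LINT x|lebesgue. (\<Sum>Q\<in>S n. g x * psi_cube \<psi> (\<mu> n Q) x))"
    by simp
  also have "\<dots> = \<sigma> * b n * (\<Sum>Q\<in>S n. LINT x|lebesgue. g x * psi_cube \<psi> (\<mu> n Q) x)"
    using Cc_integrable[OF Cc_mult[OF g Cc_wavelet_cube]] by (simp add: Bochner_Integration.integral_sum)
  finally show ?thesis .
qed

lemma coefC_series: "coefC \<phi> series k = 0"
proof -
  have "(LINT x|lebesgue. \<phi> (x - ivec k) * block n x) = 0" for n
  proof -
    have "(LINT x|lebesgue. \<phi> (x - ivec k) * psi_cube \<psi> Q x) = 0" for Q
      using scaling_orthogonal_wavelet[OF one_in_wavelet_indices]
      by (cases Q) (simp add: psi_cube_def)
    then show ?thesis by (simp add: integral_mult_block[OF Cc_phi_shift])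
  qed
  then show ?thesis unfolding coefC_def integral_mult_series[OF Cc_phi_shift] by simp
qed

definition level_cubes :: "nat \<Rightarrow> (nat \<times> ('n \<Rightarrow> int)) set" where
  "level_cubes n = \<mu> n ` S n"

definition series_coef :: "nat \<Rightarrow> nat \<Rightarrow> ('n \<Rightarrow> int) \<Rightarrow> real" where
  "series_coef i j k = (if i = 1 \<and> (j, k) \<in> level_cubes (j div N) then \<sigma> * b (j div N) else 0)"

lemma finite_level_cubes: "finite (level_cubes n)"
  unfolding level_cubes_def using S_finite by simp

lemma fst_level_cubes: "P \<in> level_cubes n \<Longrightarrow> fst P = N * n"
  unfolding level_cubes_def using \<mu>_fst by auto

lemma coefc_series:
  assumes i: "i \<in> {1..<2^CARD('n)}"
  shows "coefc \<psi> series i j k = series_coef i j k"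
proof -
  define D where "D = (2::real) ^ (CARD('n) * j)"
  define X where "X = (if i = 1 \<and> (j, k) \<in> level_cubes (j div N) then \<sigma> * b (j div N) / D else 0)"
  have block_integral: "(LINT x|lebesgue. \<psi> i (2 ^ j *\<^sub>R x - ivec k) * block n x)
      = (if n = j div N then X else 0)" for n
  proof -
    have "(\<Sum>Q\<in>S n. LINT x|lebesgue. \<psi> i (2 ^ j *\<^sub>R x - ivec k) * psi_cube \<psi> (\<mu> n Q) x)
        = (\<Sum>Q\<in>S n. (\<lambda>P. if i = 1 \<and> P = (j, k) then 1 / D else 0) (\<mu> n Q))"
    proof (rule sum.cong[OF refl])
      fix Q
      obtain l k' where "\<mu> n Q = (l, k')" by (cases "\<mu> n Q")
      then show "(LINT x|lebesgue. \<psi> i (2 ^ j *\<^sub>R x - ivec k) * psi_cube \<psi> (\<mu> n Q) x)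
          = (\<lambda>P. if i = 1 \<and> P = (j, k) then 1 / D else 0) (\<mu> n Q)"
        using wavelet_integral_product[OF i one_in_wavelet_indices, of j k l k']
        by (auto simp: psi_cube_def D_def)
    qed
    also have "\<dots> = (\<Sum>P\<in>level_cubes n. if i = 1 \<and> P = (j, k) then 1 / D else 0)"
      unfolding level_cubes_def using \<mu>_inj_on by (simp add: sum.reindex)
    also have "\<dots> = (if i = 1 \<and> (j, k) \<in> level_cubes n then 1 / D else 0)"
      using finite_level_cubes[of n] by (cases "i = 1") simp_all
    finally show ?thesis
      using fst_level_cubes[of "(j, k)" n] N_ge_1
      by (auto simp: integral_mult_block[OF Cc_psi_shift[OF i]] X_def)
  qed
  have "coefc \<psi> series i j k = D * (\<Sum>n. if n = j div N then X else 0)"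
    unfolding coefc_def D_def integral_mult_series[OF Cc_psi_shift[OF i]] block_integral by simp
  also have "\<dots> = D * X"
    using sums_unique[OF sums_single[of "j div N" "\<lambda>_. X"]] by simp
  finally show ?thesis unfolding X_def series_coef_def D_def by simp
qed

definition coef_support :: "nat \<Rightarrow> ('n \<Rightarrow> int) set" where
  "coef_support l = {k. (l, k) \<in> level_cubes (l div N)}"

lemma finite_coef_support: "finite (coef_support l)"
proof -
  have "coef_support l \<subseteq> snd ` level_cubes (l div N)" unfolding coef_support_def by force
  then show ?thesis using finite_subset finite_level_cubes by blast
qed

lemma coef_support_empty:
  assumes "\<not> N dvd l" shows "coef_support l = {}"
proof -
  have "(l, k) \<notin> level_cubes (l div N)" for k
    using fst_level_cubes[of "(l, k)" "l div N"] assms by (metis dvd_triv_left fst_conv)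
  then show ?thesis unfolding coef_support_def by simp
qed

lemma coef_support_eq: "N dvd l \<Longrightarrow> coef_support l = snd ` level_cubes (l div N)"
  unfolding coef_support_def using fst_level_cubes by force

lemma inj_on_snd_level_cubes: "inj_on snd (level_cubes m)"
  unfolding inj_on_def using fst_level_cubes by (metis prod_eq_iff)

lemma card_coef_support: "N dvd l \<Longrightarrow> card (coef_support l) = card (S (l div N))"
  using coef_support_eq card_image[OF inj_on_snd_level_cubes] card_image[OF \<mu>_inj_on]
  unfolding level_cubes_def by simp

lemma sum_coef_support:
  assumes "N dvd l"
  shows "(\<Sum>k\<in>coef_support l. \<psi> 1 (2 ^ l *\<^sub>R x - ivec k))
       = (\<Sum>Q\<in>S (l div N). psi_cube \<psi> (\<mu> (l div N) Q) x)"
proof -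
  have "(\<Sum>k\<in>coef_support l. \<psi> 1 (2 ^ l *\<^sub>R x - ivec k))
      = (\<Sum>P\<in>level_cubes (l div N). \<psi> 1 (2 ^ l *\<^sub>R x - ivec (snd P)))"
    unfolding coef_support_eq[OF assms] by (simp add: sum.reindex[OF inj_on_snd_level_cubes])
  also have "\<dots> = (\<Sum>P\<in>level_cubes (l div N). psi_cube \<psi> P x)"
    using fst_level_cubes assms by (intro sum.cong) (auto simp: psi_cube_def split_beta)
  also have "\<dots> = (\<Sum>Q\<in>S (l div N). psi_cube \<psi> (\<mu> (l div N) Q) x)"
    unfolding level_cubes_def using \<mu>_inj_on by (simp add: sum.reindex)
  finally show ?thesis .
qed

lemma sum_wavelet_indices_single:
  "(\<Sum>i\<in>{1..<2^CARD('n)}. if i = (1::nat) then y else 0) = (y::real)"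
  using one_in_wavelet_indices[where 'n='n] by simp

lemma Qproj_series: "Qproj \<psi> series l x = (if N dvd l then block (l div N) x else 0)"
proof -
  have "Qproj \<psi> series l x
      = (\<Sum>i\<in>{1..<2^CARD('n)}. if i = (1::nat) then
           infsum (\<lambda>k. series_coef 1 l k * \<psi> 1 (2 ^ l *\<^sub>R x - ivec k)) UNIV else 0)"
    unfolding Qproj_def by (intro sum.cong) (auto simp: coefc_series series_coef_def)
  also have "\<dots> = (\<Sum>k\<in>coef_support l. \<sigma> * b (l div N) * \<psi> 1 (2 ^ l *\<^sub>R x - ivec k))"
    unfolding sum_wavelet_indices_single
    by (subst infsum_UNIV_eq_sum(1)[OF finite_coef_support])
      (auto simp: series_coef_def coef_support_def intro!: sum.cong)
  also have "\<dots> = (if N dvd l then block (l div N) x else 0)"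
    using coef_support_empty[of l] sum_coef_support[of l x] unfolding block_def
    by (auto simp: sum_distrib_left[symmetric] mult.assoc)
  finally show ?thesis .
qed

lemma Pproj_series: "Pproj \<phi> \<psi> series j x = (\<Sum>l<j. if N dvd l then block (l div N) x else 0)"
  unfolding Pproj_def Qproj_series coefC_series by simp

lemma besov_eps_series:
  "besov_eps \<psi> s p series j = (if N dvd j then 2 powr ((s - real CARD('n) / p) * real j)
     * (real (card (S (j div N))) * b (j div N) powr p) powr (1/p) else 0)"
proof -
  have "(\<Sum>i\<in>{1..<2^CARD('n)}. infsum (\<lambda>k. \<bar>coefc \<psi> series i j k\<bar> powr p) UNIV)
      = (\<Sum>i\<in>{1..<2^CARD('n)}. if i = (1::nat) then infsum (\<lambda>k. \<bar>series_coef 1 j k\<bar> powr p) UNIV else 0)"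
    by (intro sum.cong) (auto simp: coefc_series series_coef_def)
  also have "\<dots> = (\<Sum>k\<in>coef_support j. \<bar>\<sigma> * b (j div N)\<bar> powr p)"
    unfolding sum_wavelet_indices_single
    by (subst infsum_UNIV_eq_sum(1)[OF finite_coef_support])
      (auto simp: series_coef_def coef_support_def intro!: sum.cong)
  also have "\<dots> = real (card (coef_support j)) * b (j div N) powr p"
    using \<sigma>_abs b_nonneg[of "j div N"] by (simp add: abs_mult)
  finally have E: "(\<Sum>i\<in>{1..<2^CARD('n)}. infsum (\<lambda>k. \<bar>coefc \<psi> series i j k\<bar> powr p) UNIV)
      = real (card (coef_support j)) * b (j div N) powr p" .
  show ?thesis
  proof (cases "N dvd j")
    case True
    show ?thesis unfolding besov_eps_def E card_coef_support[OF True] if_P[OF True] ..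
  next
    case False
    show ?thesis unfolding besov_eps_def E coef_support_empty[OF False] if_not_P[OF False] by simp
  qed
qed

lemma besov_series:
  assumes "summable (besov_eps \<psi> s p series)"
  shows "besov \<phi> \<psi> s 1 p series"
  unfolding besov_def
proof (intro conjI allI ballI)
  show "series \<in> borel_measurable lebesgue"
    unfolding series_def[abs_def] using Cc_measurable[OF Cc_block] by (intro borel_measurable_suminf) auto
  show "integrable lebesgue (\<lambda>x. \<phi> (x - ivec k) * series x)" for k
    by (rule integrable_mult_series[OF Cc_phi_shift])
  show "integrable lebesgue (\<lambda>x. \<psi> i (2 ^ j *\<^sub>R x - ivec k) * series x)"
    if "i \<in> {1..<2^CARD('n)}" for i j k
    by (rule integrable_mult_series[OF Cc_psi_shift[OF that]])
  show "(\<lambda>k. \<bar>coefC \<phi> series k\<bar> powr p) summable_on UNIV"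
    unfolding coefC_series by simp
  show "(\<lambda>k. \<bar>coefc \<psi> series i j k\<bar> powr p) summable_on UNIV" if "i \<in> {1..<2^CARD('n)}" for i j
    unfolding coefc_series[OF that]
    by (rule infsum_UNIV_eq_sum(2)[OF finite_coef_support]) (auto simp: series_coef_def coef_support_def)
  show "summable (\<lambda>j. besov_eps \<psi> s p series j powr 1)"
    using assms by (simp add: besov_eps_nonneg)
qed

lemma besov_norm_series:
  assumes "summable (besov_eps \<psi> s p series)"
  shows "besov_norm \<phi> \<psi> s 1 p series = (\<Sum>j. besov_eps \<psi> s p series j)"
  unfolding besov_norm_def coefC_series using suminf_nonneg[OF assms besov_eps_nonneg]
  by (simp add: besov_eps_nonneg)

lemma Pproj_series_nonneg: "(\<And>n. block n x \<ge> 0) \<Longrightarrow> Pproj \<phi> \<psi> series j x \<ge> 0"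
  unfolding Pproj_series by (intro sum_nonneg) auto

lemma block_le_Pproj_series:
  assumes "\<And>n. block n x \<ge> 0" and "N * m < j"
  shows "block m x \<le> Pproj \<phi> \<psi> series j x"
proof -
  have "(if N dvd (N * m) then block ((N * m) div N) x else 0)
      \<le> (\<Sum>l<j. if N dvd l then block (l div N) x else 0)"
    by (rule member_le_sum) (use assms in auto)
  then show ?thesis unfolding Pproj_series using N_ge_1 by simp
qed

end

section \<open>Counting dyadic cubes that meet a set of small upper box dimension\<close>

lemma dyadic_index_near:
  fixes y u :: real and k :: int
  assumes "k / 2 ^ l \<le> y" "y \<le> (k + 1) / 2 ^ l" "\<bar>y - u\<bar> \<le> 1 / 2 ^ l"
  shows "k \<in> {\<lfloor>u * 2 ^ l\<rfloor> - 2 .. \<lfloor>u * 2 ^ l\<rfloor> + 1}"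
proof -
  have p: "(0::real) < 2 ^ l" by simp
  have lo: "k \<le> y * 2 ^ l" using assms(1) p by (simp add: divide_le_eq)
  have hi: "y * 2 ^ l \<le> k + 1" using assms(2) p by (simp add: le_divide_eq)
  have "\<bar>y * 2 ^ l - u * 2 ^ l\<bar> = \<bar>y - u\<bar> * 2 ^ l" by (simp add: left_diff_distrib[symmetric] abs_mult)
  also have "\<dots> \<le> 1" using assms(3) p by (simp add: le_divide_eq)
  finally have near: "\<bar>y * 2 ^ l - u * 2 ^ l\<bar> \<le> 1" .
  have "k - 1 \<le> \<lfloor>u * 2 ^ l\<rfloor>" unfolding le_floor_iff using lo near by linarith
  moreover have "\<lfloor>u * 2 ^ l\<rfloor> \<le> k + 2" unfolding floor_le_iff using hi near by linarith
  ultimately show ?thesis by simp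
qed

lemma card_cubes_meeting_small_set:
  fixes U :: "(real^'n::finite) set"
  assumes bU: "bounded U" and dU: "diameter U \<le> 1 / 2 ^ l"
  shows "finite {k. closed_cube (l, k) \<inter> U \<noteq> {}}" and "card {k. closed_cube (l, k) \<inter> U \<noteq> {}} \<le> 4 ^ CARD('n)"
proof -
  have "\<exists>B. finite B \<and> card B \<le> 4 ^ CARD('n) \<and> {k. closed_cube (l, k) \<inter> U \<noteq> {}} \<subseteq> B"
  proof (cases "U = {}")
    case False
    then obtain u where u: "u \<in> U" by blast
    define c where "c m = \<lfloor>u $ m * 2 ^ l\<rfloor>" for m
    define B where "B = Pi UNIV (\<lambda>m. {c m - 2 .. c m + 1})"
    have "k \<in> B" if "y \<in> closed_cube (l, k)" "y \<in> U" for k y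
    proof -
      have "k m \<in> {c m - 2 .. c m + 1}" for m
      proof (rule dyadic_index_near[of "k m" l "y $ m" "u $ m", folded c_def])
        show "\<bar>y $ m - u $ m\<bar> \<le> 1 / 2 ^ l"
          using component_le_norm_cart[of "y - u" m] diameter_bounded_bound[OF bU that(2) u] dU
          by (simp add: dist_norm)
      qed (use that(1) in \<open>auto simp: closed_cube_def\<close>)
      then show ?thesis unfolding B_def by auto
    qed
    moreover have "finite B" unfolding B_def PiE_UNIV_domain[symmetric] by (intro finite_PiE) auto
    moreover have "card B = 4 ^ CARD('n)"
      unfolding B_def PiE_UNIV_domain[symmetric] by (subst card_PiE) simp_all
    ultimately show ?thesis by (intro exI[of _ B]) auto
  qed (intro exI[of _ "{}"], simp)
  then show "finite {k. closed_cube (l, k) \<inter> U \<noteq> {}}" "card {k. closed_cube (l, k) \<inter> U \<noteq> {}} \<le> 4 ^ CARD('n)"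
    by (meson card_mono finite_subset order_trans)+
qed

lemma card_cubes_meeting_covered_set:
  fixes G :: "(real^'n::finite) set"
  assumes fin: "finite F" and cov: "G \<subseteq> \<Union>F" and small: "\<forall>U\<in>F. bounded U \<and> diameter U \<le> 1 / 2 ^ l"
    and level: "\<forall>Q\<in>\<Theta>. fst Q = l"
  shows "card {Q\<in>\<Theta>. closed_cube Q \<inter> G \<noteq> {}} \<le> 4 ^ CARD('n) * card F"
proof -
  define C where "C U = Pair l ` {k. closed_cube (l, k) \<inter> U \<noteq> {}}" for U :: "(real^'n) set"
  have sub: "{Q\<in>\<Theta>. closed_cube Q \<inter> G \<noteq> {}} \<subseteq> (\<Union>U\<in>F. C U)"
  proof
    fix Q assume Q: "Q \<in> {Q\<in>\<Theta>. closed_cube Q \<inter> G \<noteq> {}}"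
    then obtain y U where y: "y \<in> closed_cube Q" "y \<in> U" and U: "U \<in> F" using cov by blast
    have "Q = (l, snd Q)" using Q level by (simp add: prod_eq_iff)
    then have "Q \<in> C U" unfolding C_def using y by (intro image_eqI[of _ _ "snd Q"]) auto
    then show "Q \<in> (\<Union>U\<in>F. C U)" using U by blast
  qed
  have C: "finite (C U) \<and> card (C U) \<le> 4 ^ CARD('n)" if "U \<in> F" for U
    using card_cubes_meeting_small_set[of U l] small that card_image_le[of _ "Pair l"]
    unfolding C_def by (meson finite_imageI order_trans)
  have "card {Q\<in>\<Theta>. closed_cube Q \<inter> G \<noteq> {}} \<le> card (\<Union>U\<in>F. C U)"
    using fin C by (intro card_mono[OF _ sub]) auto
  also have "\<dots> \<le> (\<Sum>U\<in>F. card (C U))" by (rule card_UN_le[OF fin])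
  also have "\<dots> \<le> (\<Sum>U\<in>F. 4 ^ CARD('n))" using C by (intro sum_mono) auto
  also have "\<dots> = 4 ^ CARD('n) * card F" by simp
  finally show ?thesis .
qed

lemma small_cover_of_upper_box_dim_less:
  fixes G :: "'a::metric_space set"
  assumes "upper_box_dim G < ereal \<beta>"
  obtains \<delta>0 where "\<delta>0 > 0" and "\<And>\<delta>. 0 < \<delta> \<Longrightarrow> \<delta> < \<delta>0 \<Longrightarrow> \<exists>F. finite F \<and> G \<subseteq> \<Union>F
      \<and> (\<forall>U\<in>F. bounded U \<and> diameter U \<le> \<delta>) \<and> real (card F) < \<delta> powr (- \<beta>)"
proof -
  have "eventually (\<lambda>\<delta>. eln (cover_number \<delta> G) / ereal (- ln \<delta>) < ereal \<beta>) (at_right 0)"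
    using assms unfolding upper_box_dim_def by (rule Limsup_lessD)
  then obtain b where b: "b > 0" "\<And>\<delta>. \<delta> > 0 \<Longrightarrow> \<delta> < b \<Longrightarrow> eln (cover_number \<delta> G) / ereal (- ln \<delta>) < ereal \<beta>"
    unfolding eventually_at_right_field by auto
  show ?thesis
  proof (rule that[of "min b 1"])
    fix \<delta> :: real assume d: "0 < \<delta>" "\<delta> < min b 1"
    define L where "L = - ln \<delta>"
    have L: "L > 0" unfolding L_def using d by simp
    have lt: "eln (cover_number \<delta> G) / ereal L < ereal \<beta>" using b(2)[of \<delta>] d unfolding L_def by simp
    have "cover_number \<delta> G < ereal (exp (\<beta> * L))"
    proof (cases "cover_number \<delta> G")
      case (real r)
      show ?thesis
      proof (cases "r \<le> 0")
        case False
        then have "ln r < \<beta> * L" using lt real L by (simp add: eln_def divide_less_eq)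
        then have "r < exp (\<beta> * L)" using False by (metis exp_less_mono exp_ln not_le)
        then show ?thesis using real by simp
      qed (use real in \<open>simp add: le_less_trans[OF _ exp_gt_zero]\<close>)
    qed (use lt L in \<open>simp_all add: eln_def\<close>)
    moreover have "\<delta> powr (- \<beta>) = exp (\<beta> * L)" unfolding L_def powr_def using d by simp
    ultimately show "\<exists>F. finite F \<and> G \<subseteq> \<Union>F \<and> (\<forall>U\<in>F. bounded U \<and> diameter U \<le> \<delta>)
        \<and> real (card F) < \<delta> powr (- \<beta>)"
      unfolding cover_number_def Inf_less_iff by auto
  qed (use b in simp)
qed

lemma card_cubes_meeting_le_box_dim:
  fixes G :: "(real^'n::finite) set"
  assumes "upper_box_dim G < ereal \<beta>"
  obtains l0 where "\<And>l \<Theta>. l0 \<le> l \<Longrightarrow> (\<forall>Q\<in>\<Theta>. fst Q = l) \<Longrightarrow>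
      real (card {Q\<in>\<Theta>. closed_cube Q \<inter> G \<noteq> {}}) \<le> 4 ^ CARD('n) * 2 powr (\<beta> * real l)"
proof -
  obtain \<delta>0 where \<delta>0: "\<delta>0 > 0" "\<And>\<delta>. 0 < \<delta> \<Longrightarrow> \<delta> < \<delta>0 \<Longrightarrow> \<exists>F. finite F \<and> G \<subseteq> \<Union>F
      \<and> (\<forall>U\<in>F. bounded U \<and> diameter U \<le> \<delta>) \<and> real (card F) < \<delta> powr (- \<beta>)"
    using small_cover_of_upper_box_dim_less[OF assms] by blast
  obtain l0 where l0: "(1/2::real) ^ l0 < \<delta>0" using real_arch_pow_inv[OF \<delta>0(1), of "1/2"] by auto
  show ?thesis
  proof (rule that)
    fix l and \<Theta> :: "(nat \<times> ('n \<Rightarrow> int)) set" assume l: "l0 \<le> l" and level: "\<forall>Q\<in>\<Theta>. fst Q = l"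
    have "(1 / 2 ^ l :: real) = (1/2) ^ l" by (simp add: power_one_over)
    also have "\<dots> \<le> (1/2) ^ l0" using l by (intro power_decreasing) auto
    finally obtain F where F: "finite F" "G \<subseteq> \<Union>F" "\<forall>U\<in>F. bounded U \<and> diameter U \<le> 1 / 2 ^ l"
        "real (card F) < (1 / 2 ^ l) powr (- \<beta>)"
      using \<delta>0(2)[of "1 / 2 ^ l"] l0 by auto
    have "real (card {Q\<in>\<Theta>. closed_cube Q \<inter> G \<noteq> {}}) \<le> 4 ^ CARD('n) * real (card F)"
      using card_cubes_meeting_covered_set[OF F(1-3) level] of_nat_mono by fastforce
    also have "\<dots> \<le> 4 ^ CARD('n) * (1 / 2 ^ l) powr (- \<beta>)" using F(4) by simp
    also have "(1 / 2 ^ l :: real) powr (- \<beta>) = 2 powr (\<beta> * real l)"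
    proof -
      have "(1 / 2 ^ l :: real) = 2 powr (- real l)" by (simp add: powr_minus powr_realpow divide_inverse)
      then show ?thesis by (simp add: powr_powr mult.commute)
    qed
    finally show "real (card {Q\<in>\<Theta>. closed_cube Q \<inter> G \<noteq> {}}) \<le> 4 ^ CARD('n) * 2 powr (\<beta> * real l)" .
  qed
qed

lemma mass_bound_powr:
  fixes M c s p d \<beta> t x A :: real
  assumes M0: "0 \<le> M" and Mb: "M \<le> A * 2 powr (\<beta> * (t + x))" and A: "0 < A" and \<beta>: "\<beta> \<le> d"
    and p: "p \<ge> 1" and s: "s > 0" and x: "x \<ge> 0" and t: "t \<ge> 0" and c: "c \<ge> 0"
  shows "c * 2 powr ((d / p - s) * x) * M powr (- 1 / p) * M / 2 powr (d * x)
         \<le> (A * 2 powr (d * t)) powr (1 - 1 / p) * c"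
proof (cases "M = 0")
  case False
  then have Mp: "M > 0" using M0 by simp
  define q where "q = 1 - 1 / p"
  define B where "B = (A * 2 powr (d * t)) powr q"
  have q0: "q \<ge> 0" using p unfolding q_def by (simp add: field_simps)
  have "M powr (- 1 / p) * M = M powr (- 1 / p) * M powr 1" using Mp by simp
  also have "\<dots> = M powr q" unfolding q_def by (subst powr_add[symmetric]) simp
  also have "\<dots> \<le> (A * 2 powr (d * (t + x))) powr q"
    using M0 Mb \<beta> t x A q0 by (intro powr_mono2 order.trans[OF Mb]) (auto intro!: mult_left_mono mult_right_mono)
  also have "\<dots> = B * 2 powr (d * q * x)"
    using A by (simp add: B_def powr_mult powr_powr powr_add[symmetric] algebra_simps)
  finally have I: "M powr (- 1 / p) * M \<le> B * 2 powr (d * q * x)" .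
  have "c * 2 powr ((d / p - s) * x) * M powr (- 1 / p) * M / 2 powr (d * x)
      \<le> c * 2 powr ((d / p - s) * x) * (B * 2 powr (d * q * x)) / 2 powr (d * x)"
    using mult_left_mono[OF I, of "c * 2 powr ((d / p - s) * x)"] c
    by (simp add: divide_right_mono mult.assoc)
  also have "\<dots> = B * c * 2 powr ((d / p - s) * x + d * q * x - d * x)"
    by (simp add: powr_add powr_diff)
  also have "(d / p - s) * x + d * q * x - d * x = - s * x"
    unfolding q_def by (simp add: algebra_simps)
  also have "B * c * 2 powr (- s * x) \<le> B * c"
  proof -
    have "2 powr (- s * x) \<le> 2 powr 0" using s x by (subst powr_le_cancel_iff) auto
    then show ?thesis using c by (intro mult_left_le) (auto simp: B_def)
  qed
  finally show ?thesis unfolding B_def q_def .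
qed (use A c in simp)

lemma normalized_level_eps:
  fixes M c s p d x :: real
  assumes "0 \<le> M" and "p \<ge> 1" and "c \<ge> 0"
  shows "2 powr ((s - d / p) * x) * (M * (c * 2 powr ((d / p - s) * x) * M powr (- 1 / p)) powr p) powr (1 / p) \<le> c"
proof (cases "M = 0")
  case False
  then have Mp: "M > 0" using assms by simp
  define B where "B = c * 2 powr ((d / p - s) * x) * M powr (- 1 / p)"
  have B0: "B \<ge> 0" unfolding B_def using assms by simp
  have "(M * B powr p) powr (1 / p) = M powr (1 / p) * (B powr p) powr (1 / p)"
    using Mp B0 by (simp add: powr_mult)
  also have "(B powr p) powr (1 / p) = B" using B0 assms by (simp add: powr_powr)
  also have "M powr (1 / p) * B = c * 2 powr ((d / p - s) * x) * (M powr (1 / p) * M powr (- 1 / p))"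
    unfolding B_def by (simp only: mult_ac)
  also have "M powr (1 / p) * M powr (- 1 / p) = 1"
    using Mp by (subst powr_add[symmetric]) simp
  finally show ?thesis
    unfolding B_def[symmetric] by (simp add: powr_add[symmetric] algebra_simps)
qed (use assms in simp)

lemma Liminf_log_rate_ge:
  fixes f :: "nat \<Rightarrow> real"
  assumes K: "K > 0" and A: "A0 < A"
    and ev: "eventually (\<lambda>j. K * 2 powr (A * real j) \<le> f j) sequentially"
  shows "ereal A0 \<le> Liminf sequentially (\<lambda>j. eln (ereal \<bar>f j\<bar>) / ereal (real j * ln 2))"
proof (rule Liminf_bounded)
  define J where "J = max 1 (- ln K / ((A - A0) * ln 2))"
  have "eventually (\<lambda>j. J \<le> real j) sequentially"
    using eventually_ge_at_top[of "nat \<lceil>J\<rceil>"] by eventually_elim linarith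
  then show "eventually (\<lambda>j. ereal A0 \<le> eln (ereal \<bar>f j\<bar>) / ereal (real j * ln 2)) sequentially"
    using ev
  proof eventually_elim
    fix j assume j: "J \<le> real j" and fj: "K * 2 powr (A * real j) \<le> f j"
    have jl: "real j * ln 2 > 0" using j unfolding J_def by simp
    have pos: "0 < K * 2 powr (A * real j)" using K by simp
    have c: "(A - A0) * ln 2 > 0" using A by simp
    have "- ln K / ((A - A0) * ln 2) \<le> real j" using j unfolding J_def by simp
    then have "- ln K \<le> (A - A0) * real j * ln 2" by (simp only: pos_divide_le_eq[OF c] ac_simps)
    then have "A0 * (real j * ln 2) \<le> ln (K * 2 powr (A * real j))"
      using K by (simp add: ln_mult algebra_simps)
    also have "\<dots> \<le> ln (f j)" using fj pos by simp
    finally have "A0 \<le> ln (f j) / (real j * ln 2)" using jl by (simp add: pos_le_divide_eq)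
    moreover have "eln (ereal \<bar>f j\<bar>) = ereal (ln (f j))" using fj pos by (simp add: eln_def)
    moreover have "ereal (ln (f j)) / ereal (real j * ln 2) = ereal (ln (f j) / (real j * ln 2))"
      unfolding ereal_divide if_not_P[OF less_imp_neq[OF jl, symmetric]] ..
    ultimately show "ereal A0 \<le> eln (ereal \<bar>f j\<bar>) / ereal (real j * ln 2)"
      by (simp only: ereal_less_eq(3))
  qed
qed

lemma block_index_exists:
  fixes N n0 j :: nat
  assumes "N \<ge> 1" and "N * n0 < j"
  obtains m where "n0 \<le> m" and "N * m < j" and "j \<le> N * m + N"
proof
  define m where "m = (j - 1) div N"
  have "(N * n0) div N \<le> (j - 1) div N" using assms by (intro div_le_mono) linarith
  then show "n0 \<le> (j - 1) div N" using assms by simp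
  show "N * ((j - 1) div N) < j"
    using times_div_less_eq_dividend[of N "j - 1"] assms by linarith
  have "j - 1 = N * ((j - 1) div N) + (j - 1) mod N" "(j - 1) mod N < N" using assms by simp_all
  then show "j \<le> N * ((j - 1) div N) + N" by linarith
qed

locale cantor_series = compact_wavelets V \<phi> \<psi>
  for V :: "int \<Rightarrow> (real^'n::finite \<Rightarrow> real) set" and \<phi> \<psi> +
  fixes s p \<alpha> \<beta> a :: real and t N n0 :: nat
    and \<Theta> :: "nat \<Rightarrow> (nat \<times> ('n \<Rightarrow> int)) set"
    and \<mu> :: "nat \<Rightarrow> nat \<times> ('n \<Rightarrow> int) \<Rightarrow> nat \<times> ('n \<Rightarrow> int)"
    and K G :: "(real^'n) set"
  assumes p_ge_1: "p \<ge> 1" and s_pos: "s > 0"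
    and \<beta>_less_\<alpha>: "\<beta> < \<alpha>" and \<alpha>_less: "\<alpha> < real CARD('n) - s * p"
    and N_pos: "N \<ge> 1" and a_nonzero: "a \<noteq> 0"
    and \<Theta>_finite: "\<And>n. finite (\<Theta> n)" and \<mu>_inj: "\<And>n. inj_on (\<mu> n) (\<Theta> n)"
    and \<mu>_level: "\<And>n Q. Q \<in> \<Theta> n \<Longrightarrow> fst (\<mu> n Q) = N * n"
    and K_eq: "K = (\<Inter>n. cantor_level \<Theta> n)"
    and adapted: "\<And>n x Q. x \<in> cantor_level \<Theta> n \<Longrightarrow> Q \<in> \<Theta> n \<Longrightarrow>
        (x \<in> closed_cube Q \<longrightarrow> a * psi_cube \<psi> (\<mu> n Q) x \<ge> 1)
        \<and> (x \<notin> closed_cube Q \<longrightarrow> psi_cube \<psi> (\<mu> n Q) x = 0)"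
    and G_subset: "G \<subseteq> K"
    and card_meeting_G: "\<And>n. n0 \<le> n \<Longrightarrow>
        real (card {Q\<in>\<Theta> n. closed_cube Q \<inter> G \<noteq> {}}) \<le> 4 ^ CARD('n) * 2 powr (\<beta> * real (t + N * n))"
begin

definition active_cubes :: "nat \<Rightarrow> (nat \<times> ('n \<Rightarrow> int)) set" where
  "active_cubes n = (if n0 \<le> n then {Q\<in>\<Theta> n. closed_cube Q \<inter> G \<noteq> {}} else {})"

definition decay :: real where
  "decay = 2 powr (- (real N * (\<alpha> - \<beta>) / (2 * p)))"

definition weight :: "nat \<Rightarrow> real" where
  "weight n = (1 - decay) * decay ^ n"

text \<open>The amplitude makes $\varepsilon_{Nn}$ of the series equal to the weight $(1-r)r^n$, so the
  Besov norm is $\sum_n (1-r)r^n = 1$. Since $r = 2^{-N(\alpha-\beta)/(2p)}$, the weights cost only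
  half of the margin $\alpha - \beta$: the blocks still grow at the rate $(d-sp-\alpha)/p + (\alpha-\beta)/(2p)$.\<close>
definition amplitude :: "nat \<Rightarrow> real" where
  "amplitude n = weight n * 2 powr ((real CARD('n) / p - s) * (real N * real n))
                 * real (card (active_cubes n)) powr (- 1 / p)"

definition growth_rate :: real where
  "growth_rate = (2 * real CARD('n) - 2 * s * p - \<alpha> - \<beta>) / (2 * p)"

lemma decay_pos: "0 < decay" and decay_less_1: "decay < 1"
proof -
  show "0 < decay" unfolding decay_def by simp
  have "real N * (\<alpha> - \<beta>) / (2 * p) > 0" using N_pos \<beta>_less_\<alpha> p_ge_1 by simp
  then show "decay < 1" unfolding decay_def by (simp add: powr_less_one)
qed

lemma weight_nonneg: "weight n \<ge> 0"
  unfolding weight_def using decay_pos decay_less_1 by simp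

lemma weight_sums: "weight sums 1"
  using sums_mult[OF geometric_sums[of decay], of "1 - decay"] decay_pos decay_less_1
  unfolding weight_def[abs_def] by simp

lemma active_cubes_subset: "active_cubes n \<subseteq> \<Theta> n"
  unfolding active_cubes_def by auto

lemma card_active_cubes_le:
  "real (card (active_cubes n)) \<le> 4 ^ CARD('n) * 2 powr (\<beta> * (real t + real N * real n))"
  using card_meeting_G[of n] unfolding active_cubes_def by auto

lemma amplitude_nonneg: "amplitude n \<ge> 0"
  unfolding amplitude_def using weight_nonneg by simp

lemma mass_summable:
  "summable (\<lambda>n. amplitude n * real (card (active_cubes n)) / 2 ^ (CARD('n) * (N * n)))"
proof (rule summable_comparison_test[OF _ summable_mult[OF sums_summable[OF weight_sums]]])
  define C where "C = (4 ^ CARD('n) * 2 powr (real CARD('n) * real t)) powr (1 - 1 / p)"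
  have "amplitude n * real (card (active_cubes n)) / 2 ^ (CARD('n) * (N * n)) \<le> C * weight n" for n
  proof -
    have pow: "(2::real) ^ (CARD('n) * (N * n)) = 2 powr (real CARD('n) * (real N * real n))"
      by (simp add: powr_realpow[symmetric])
    have \<beta>_le: "\<beta> \<le> real CARD('n)"
      using \<beta>_less_\<alpha> \<alpha>_less mult_pos_pos[OF s_pos, of p] p_ge_1 by linarith
    show ?thesis
      unfolding amplitude_def C_def pow
      by (rule mass_bound_powr[OF _ card_active_cubes_le _ \<beta>_le p_ge_1 s_pos _ _ weight_nonneg]) auto
  qed
  then show "\<exists>M. \<forall>n\<ge>M. norm (amplitude n * real (card (active_cubes n)) / 2 ^ (CARD('n) * (N * n)))
      \<le> C * weight n"
    using amplitude_nonneg by auto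
qed

sublocale lacunary_series V \<phi> \<psi> active_cubes \<mu> N amplitude "sgn a"
proof unfold_locales
  fix n
  show "finite (active_cubes n)" using finite_subset[OF active_cubes_subset \<Theta>_finite] .
  show "inj_on (\<mu> n) (active_cubes n)" using inj_on_subset[OF \<mu>_inj active_cubes_subset] .
  show "Q \<in> active_cubes n \<Longrightarrow> fst (\<mu> n Q) = N * n" for Q using \<mu>_level active_cubes_subset by blast
qed (use N_pos amplitude_nonneg a_nonzero mass_summable in \<open>simp_all add: abs_sgn\<close>)

lemma besov_eps_series_le: "besov_eps \<psi> s p series j \<le> (if N dvd j then weight (j div N) else 0)"
proof (cases "N dvd j")
  case True
  then have j: "real j = real N * real (j div N)" by (metis dvd_mult_div_cancel of_nat_mult)
  show ?thesis
    unfolding besov_eps_series amplitude_def if_P[OF True] j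
    by (rule normalized_level_eps[OF _ p_ge_1 weight_nonneg]) simp
qed (simp add: besov_eps_series)

lemma besov_series_norm_le_1: "besov \<phi> \<psi> s 1 p series \<and> besov_norm \<phi> \<psi> s 1 p series \<le> 1"
proof -
  define w where "w j = (if N dvd j then weight (j div N) else 0)" for j
  have "(\<lambda>m. w (N * m)) sums 1" unfolding w_def using N_pos weight_sums by simp
  moreover have "strict_mono (\<lambda>m. N * m)" using N_pos by (intro strict_monoI) simp
  ultimately have w: "w sums 1"
    by (subst (asm) sums_mono_reindex) (auto simp: w_def elim!: dvdE)
  have le: "besov_eps \<psi> s p series j \<le> w j" for j
    unfolding w_def by (rule besov_eps_series_le)
  have sm: "summable (besov_eps \<psi> s p series)"
    by (rule summable_comparison_test'[OF sums_summable[OF w]]) (simp add: le besov_eps_nonneg)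
  have "(\<Sum>j. besov_eps \<psi> s p series j) \<le> 1"
    using suminf_le[OF le sm sums_summable[OF w]] sums_unique[OF w] by simp
  then show ?thesis using besov_series[OF sm] besov_norm_series[OF sm] by simp
qed

lemma K_in_cantor_level: "x \<in> K \<Longrightarrow> x \<in> cantor_level \<Theta> n"
  using K_eq by blast

lemma signed_psi_cube_on_K:
  assumes "x \<in> K" and "Q \<in> active_cubes n"
  shows "sgn a * psi_cube \<psi> (\<mu> n Q) x \<ge> 0"
    and "x \<in> closed_cube Q \<Longrightarrow> sgn a * psi_cube \<psi> (\<mu> n Q) x \<ge> 1 / \<bar>a\<bar>"
proof -
  have psi: "(x \<in> closed_cube Q \<longrightarrow> a * psi_cube \<psi> (\<mu> n Q) x \<ge> 1)
      \<and> (x \<notin> closed_cube Q \<longrightarrow> psi_cube \<psi> (\<mu> n Q) x = 0)"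
    using adapted[OF K_in_cantor_level[OF assms(1)]] assms(2) active_cubes_subset by blast
  have eq: "sgn a * psi_cube \<psi> (\<mu> n Q) x = a * psi_cube \<psi> (\<mu> n Q) x / \<bar>a\<bar>"
    using a_nonzero by (simp add: sgn_if)
  show lower: "x \<in> closed_cube Q \<Longrightarrow> sgn a * psi_cube \<psi> (\<mu> n Q) x \<ge> 1 / \<bar>a\<bar>"
    using psi unfolding eq by (simp add: divide_right_mono)
  show "sgn a * psi_cube \<psi> (\<mu> n Q) x \<ge> 0"
    using psi lower by (cases "x \<in> closed_cube Q") (auto intro: order_trans[rotated])
qed

lemma block_eq: "block n x = amplitude n * (\<Sum>Q\<in>active_cubes n. sgn a * psi_cube \<psi> (\<mu> n Q) x)"
  unfolding block_def by (simp add: sum_distrib_left ac_simps)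

lemma block_nonneg_on_K: assumes "x \<in> K" shows "block n x \<ge> 0"
  unfolding block_eq using amplitude_nonneg signed_psi_cube_on_K(1)[OF assms]
  by (simp add: sum_nonneg)

lemma block_lower_bound_on_G:
  assumes x: "x \<in> G" and m: "n0 \<le> m"
  shows "active_cubes m \<noteq> {}" and "amplitude m / \<bar>a\<bar> \<le> block m x"
proof -
  have xK: "x \<in> K" using x G_subset by blast
  obtain Q where "Q \<in> \<Theta> m" "x \<in> closed_cube Q"
    using K_in_cantor_level[OF xK] unfolding cantor_level_def by blast
  then have Q: "Q \<in> active_cubes m" "x \<in> closed_cube Q" using m x unfolding active_cubes_def by auto
  then show "active_cubes m \<noteq> {}" by blast
  have "1 / \<bar>a\<bar> \<le> sgn a * psi_cube \<psi> (\<mu> m Q) x" using signed_psi_cube_on_K(2)[OF xK Q] .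
  also have "\<dots> \<le> (\<Sum>Q\<in>active_cubes m. sgn a * psi_cube \<psi> (\<mu> m Q) x)"
    using S_finite signed_psi_cube_on_K(1)[OF xK] Q(1) by (intro member_le_sum) auto
  finally show "amplitude m / \<bar>a\<bar> \<le> block m x"
    unfolding block_eq using amplitude_nonneg mult_left_mono by fastforce
qed

lemma amplitude_lower_bound:
  assumes "active_cubes m \<noteq> {}"
  shows "(1 - decay) * (4 ^ CARD('n)) powr (- 1 / p) * 2 powr (growth_rate * (real N * real m) - \<beta> * real t / p)
           \<le> amplitude m"
proof -
  define x where "x = real N * real m"
  define A where "A = (4::real) ^ CARD('n)"
  have card: "1 \<le> real (card (active_cubes m))"
    using assms S_finite[of m] by (simp add: Suc_le_eq card_gt_0_iff)
  have "(A * 2 powr (\<beta> * (real t + x))) powr (- 1 / p) \<le> real (card (active_cubes m)) powr (- 1 / p)"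
    using card card_active_cubes_le[of m] p_ge_1 unfolding A_def x_def by (intro powr_mono2') auto
  then have "weight m * 2 powr ((real CARD('n) / p - s) * x) * (A * 2 powr (\<beta> * (real t + x))) powr (- 1 / p)
      \<le> amplitude m"
    unfolding amplitude_def x_def using weight_nonneg by (intro mult_left_mono) auto
  moreover have "decay ^ m = 2 powr (- (real N * (\<alpha> - \<beta>) / (2 * p)) * real m)"
    unfolding decay_def by (simp add: powr_power mult.commute)
  moreover have "- (real N * (\<alpha> - \<beta>) / (2 * p)) * real m + (real CARD('n) / p - s) * x
      - \<beta> * (real t + x) / p = growth_rate * x - \<beta> * real t / p"
    using p_ge_1 unfolding growth_rate_def x_def by (simp add: field_simps)
  ultimately show ?thesis
    unfolding weight_def A_def x_def
    by (simp add: powr_mult powr_powr powr_add[symmetric] mult_ac)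
qed

lemma Pproj_series_nonneg_on_K: "x \<in> K \<Longrightarrow> Pproj \<phi> \<psi> series j x \<ge> 0"
  using Pproj_series_nonneg block_nonneg_on_K by blast

lemma Pproj_series_growth_on_G:
  assumes x: "x \<in> G"
  obtains C where "C > 0" and "\<And>j. N * n0 < j \<Longrightarrow> C * 2 powr (growth_rate * real j) \<le> Pproj \<phi> \<psi> series j x"
proof
  define C0 where "C0 = (1 - decay) * (4 ^ CARD('n)) powr (- 1 / p) / \<bar>a\<bar>"
  define C where "C = C0 * 2 powr (- (growth_rate * real N + \<beta> * real t / p))"
  have C0: "C0 > 0" unfolding C0_def using decay_less_1 a_nonzero by simp
  then show "C > 0" unfolding C_def by simp
  have rate: "growth_rate \<ge> 0"
    using \<beta>_less_\<alpha> \<alpha>_less p_ge_1 unfolding growth_rate_def by (simp add: field_simps)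
  fix j assume j: "N * n0 < j"
  obtain m where m: "n0 \<le> m" "N * m < j" "j \<le> N * m + N" using block_index_exists[OF N_pos j] .
  have "C * 2 powr (growth_rate * real j) = C0 * 2 powr (growth_rate * (real j - real N) - \<beta> * real t / p)"
    unfolding C_def by (simp add: powr_add[symmetric] algebra_simps)
  also have "\<dots> \<le> C0 * 2 powr (growth_rate * (real N * real m) - \<beta> * real t / p)"
  proof -
    have "real j - real N \<le> real N * real m" using m(3) by (simp flip: of_nat_mult)
    then show ?thesis using rate C0 by (simp add: mult_left_mono)
  qed
  also have "\<dots> \<le> amplitude m / \<bar>a\<bar>"
    using amplitude_lower_bound[OF block_lower_bound_on_G(1)[OF x m(1)]] a_nonzero
    unfolding C0_def by (simp add: divide_right_mono)
  also have "\<dots> \<le> block m x" by (rule block_lower_bound_on_G(2)[OF x m(1)])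
  also have "\<dots> \<le> Pproj \<phi> \<psi> series j x"
    using block_le_Pproj_series block_nonneg_on_K x G_subset m(2) by blast
  finally show "C * 2 powr (growth_rate * real j) \<le> Pproj \<phi> \<psi> series j x" .
qed

lemma Liminf_Pproj_series_on_G:
  assumes "x \<in> G"
  shows "ereal ((real CARD('n) - s * p - \<alpha>) / p)
    \<le> Liminf sequentially (\<lambda>j. eln (ereal \<bar>Pproj \<phi> \<psi> series j x\<bar>) / ereal (real j * ln 2))"
proof -
  obtain C where C: "C > 0" "\<And>j. N * n0 < j \<Longrightarrow> C * 2 powr (growth_rate * real j) \<le> Pproj \<phi> \<psi> series j x"
    using Pproj_series_growth_on_G[OF assms] by blast
  have "(real CARD('n) - s * p - \<alpha>) / p < growth_rate"
    using \<beta>_less_\<alpha> p_ge_1 unfolding growth_rate_def by (simp add: field_simps)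
  moreover have "eventually (\<lambda>j. C * 2 powr (growth_rate * real j) \<le> Pproj \<phi> \<psi> series j x) sequentially"
    by (rule eventually_sequentiallyI[of "Suc (N * n0)"], rule C(2)) simp
  ultimately show ?thesis by (rule Liminf_log_rate_ge[OF C(1)])
qed

end

theorem theorem4p2:
  fixes V :: "int \<Rightarrow> (real^'n::finite \<Rightarrow> real) set"
    and \<phi> :: "real^'n \<Rightarrow> real"
    and \<psi> :: "nat \<Rightarrow> real^'n \<Rightarrow> real"
    and s p d' \<alpha> a :: real
    and K G :: "(real^'n) set"
    and t N :: nat
    and \<Theta> :: "nat \<Rightarrow> (nat \<times> ('n \<Rightarrow> int)) set"
    and \<mu> :: "nat \<Rightarrow> nat \<times> ('n \<Rightarrow> int) \<Rightarrow> nat \<times> ('n \<Rightarrow> int)"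
  assumes mra: "orth_mra V \<phi>"
    and wav: "mra_wavelets V \<psi>"
    and smooth_phi: "Ck (nat \<lfloor>s\<rfloor> + 1) \<phi>"
    and smooth_psi: "\<forall>i\<in>{1..<2^CARD('n)}. Ck (nat \<lfloor>s\<rfloor> + 1) (\<psi> i)"
    and supp_phi: "compactly_supported \<phi>"
    and supp_psi: "\<forall>i\<in>{1..<2^CARD('n)}. compactly_supported (\<psi> i)"
    and s_pos: "s > 0"
    and p_ge: "p \<ge> 1"
    and dsp: "real CARD('n) - s * p > 0"
    and d'_gt: "real CARD('n) - s * p < d'"
    and d'_lt: "d' < real CARD('n)"
    and cantor: "adapted_cantor_data \<psi> d' K t N a \<Theta> \<mu>"
    and alpha: "0 < \<alpha>" "\<alpha> < real CARD('n) - s * p"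
    and GK: "G \<subseteq> K"
    and boxG: "upper_box_dim G < ereal \<alpha>"
  shows "\<exists>f. besov \<phi> \<psi> s 1 p f \<and> besov_norm \<phi> \<psi> s 1 p f \<le> 1
           \<and> (\<forall>x\<in>K. \<forall>j. Pproj \<phi> \<psi> f j x \<ge> 0)
           \<and> (\<forall>x\<in>G. Liminf sequentially
                 (\<lambda>j. eln (ereal \<bar>Pproj \<phi> \<psi> f j x\<bar>) / ereal (real j * ln 2))
               \<ge> ereal ((real CARD('n) - s * p - \<alpha>) / p))"
proof -
  obtain \<beta> where \<beta>: "upper_box_dim G < ereal \<beta>" "\<beta> < \<alpha>"
    using ereal_dense2[OF boxG] by auto
  obtain l0 where l0: "\<And>l \<Theta>'. l0 \<le> l \<Longrightarrow> (\<forall>Q\<in>\<Theta>'. fst Q = l) \<Longrightarrow>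
      real (card {Q\<in>\<Theta>'. closed_cube Q \<inter> G \<noteq> {}}) \<le> 4 ^ CARD('n) * 2 powr (\<beta> * real l)"
    using card_cubes_meeting_le_box_dim[OF \<beta>(1)] by blast
  interpret cantor_series V \<phi> \<psi> s p \<alpha> \<beta> a t N l0 \<Theta> \<mu> K G
  proof unfold_locales
    show "Cc \<phi>" by (rule Ck_imp_Cc[OF smooth_phi supp_phi])
    show "i \<in> {1..<2^CARD('n)} \<Longrightarrow> Cc (\<psi> i)" for i
      using smooth_psi supp_psi by (blast intro: Ck_imp_Cc)
    fix n assume n: "l0 \<le> n"
    have N: "N \<ge> 1" and level: "\<forall>Q\<in>\<Theta> n. fst Q = t + N * n"
      using cantor unfolding adapted_cantor_data_def by auto
    have "n \<le> N * n" using N by simp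
    then have "l0 \<le> t + N * n" using n by linarith
    then show "real (card {Q\<in>\<Theta> n. closed_cube Q \<inter> G \<noteq> {}})
        \<le> 4 ^ CARD('n) * 2 powr (\<beta> * real (t + N * n))"
      using level by (rule l0)
  qed (use mra wav s_pos p_ge \<beta> alpha GK cantor in \<open>auto simp: adapted_cantor_data_def\<close>)
  show ?thesis
    using besov_series_norm_le_1 Pproj_series_nonneg_on_K Liminf_Pproj_series_on_G by blast
qed

end
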